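(* Assume (A1), (F), (I), let $(u,v,n)$ be the global classical solution of (P), and suppose there are constants $0<A\le B$ such that $AS\le v\le BS$ in $[0,\infty)\times\bar\Omega$. Set $\tilde S:=BS$ and $\gamma_0(s):=\min\{1,1/\gamma^*\}\gamma(s)$ for $s>0$. Then there is $C>0$ independent of $t$ such that $$\partial_t\tilde S+B\gamma_0(\tilde S)(u+n)\le\frac{\beta B}{A}\Gamma(\tilde S)+C\quad\text{in }(0,\infty)\times\Omega.$$
   Context: $\Omega\subset\mathbb{R}^N$ bounded domain with smooth boundary, $\tau,\beta>0$. Problem (P): $\partial_t u=\Delta(u\gamma(v))+uf(n)$, $\tau\partial_t v=\Delta v-\beta v+u$, $\partial_t n=\Delta n-uf(n)$ in $(0,\infty)\times\Omega$, $\nabla(u\gamma(v))\cdot\nu=\nabla v\cdot\nu=\nabla n\cdot\nu=0$ on $\partial\Omega$, $(u,v,n)(0)=(u^{in},v^{in},n^{in})$; under (A1),(F),(I) it has a unique global non-negative classical solution, and $v\ge v_*$ on $[0,\infty)\times\bar\Omega$ for a constant $v_*>0$ depending only on $\Omega,\tau,\beta,v^{in},\|u^{in}\|_1$. (A1): $\gamma\in C^3((0,\infty))$, $\gamma>0$, $\gamma'\le0$, $\lim_{s\to\infty}\gamma(s)=0$. (F): $f\in C^1([0,\infty))$, $f(0)=0$, $f\ge0$. (I): $(u^{in},v^{in},n^{in})\in W^{1,N+1}(\Omega;\mathbb{R}^3)$, $u^{in}\not\equiv0$, $u^{in},n^{in}\ge0$, $v^{in}>0$ in $\bar\Omega$.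 $\mathcal{A}z=-\Delta z+\beta z$ with homogeneous Neumann boundary conditions; $S(t):=\mathcal{A}^{-1}[u(t)+n(t)]$; $\Gamma(s):=\int_1^s\gamma(\eta)\,d\eta$; $\gamma^*:=\sup_{s\ge v_*}\gamma(s)$. *)

theory Defs
  imports "HOL-Analysis.Analysis"
begin

definition pd :: "'a::euclidean_space \<Rightarrow> ('a \<Rightarrow> real) \<Rightarrow> 'a \<Rightarrow> real" where
  "pd i w x = frechet_derivative w (at x) i"

fun pds :: "'a::euclidean_space list \<Rightarrow> ('a \<Rightarrow> real) \<Rightarrow> 'a \<Rightarrow> real" where
  "pds [] w = w"
| "pds (i # is) w = pd i (pds is w)"

definition Ck_on :: "nat \<Rightarrow> 'a::euclidean_space set \<Rightarrow> ('a \<Rightarrow> real) \<Rightarrow> bool" where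
  "Ck_on k U w \<longleftrightarrow>
     (\<forall>is. set is \<subseteq> Basis \<and> length is \<le> k \<longrightarrow>
        continuous_on U (pds is w) \<and>
        (length is < k \<longrightarrow> (\<forall>x\<in>U. pds is w differentiable (at x))))"

definition smooth_on :: "'a::euclidean_space set \<Rightarrow> ('a \<Rightarrow> real) \<Rightarrow> bool" where
  "smooth_on U w \<longleftrightarrow> (\<forall>k. Ck_on k U w)"

definition grad :: "('a::euclidean_space \<Rightarrow> real) \<Rightarrow> 'a \<Rightarrow> 'a" where
  "grad w x = (\<Sum>i\<in>Basis. pd i w x *\<^sub>R i)"

definition lap :: "('a::euclidean_space \<Rightarrow> real) \<Rightarrow> 'a \<Rightarrow> real" where
  "lap w x = (\<Sum>i\<in>Basis. pd i (pd i w) x)"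

text \<open>w is C^1 up to the boundary of the set K (one-sided derivatives at boundary points).\<close>
definition C1_upto :: "'a::euclidean_space set \<Rightarrow> ('a \<Rightarrow> real) \<Rightarrow> bool" where
  "C1_upto K w \<longleftrightarrow>
     (\<forall>x\<in>K. w differentiable (at x within K)) \<and>
     (\<forall>i\<in>Basis. continuous_on K (\<lambda>x. frechet_derivative w (at x within K) i))"

definition local_defining_fun :: "'a::euclidean_space set \<Rightarrow> 'a \<Rightarrow> real \<Rightarrow> ('a \<Rightarrow> real) \<Rightarrow> bool" where
  "local_defining_fun \<Omega> x r \<phi> \<longleftrightarrow>
     0 < r \<and> smooth_on (ball x r) \<phi> \<and> (\<forall>y\<in>ball x r. grad \<phi> y \<noteq> 0) \<and>
     \<Omega> \<inter> ball x r = {y\<in>ball x r. \<phi> y < 0}"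

definition smooth_bounded_domain :: "'a::euclidean_space set \<Rightarrow> bool" where
  "smooth_bounded_domain \<Omega> \<longleftrightarrow>
     open \<Omega> \<and> connected \<Omega> \<and> bounded \<Omega> \<and> \<Omega> \<noteq> {} \<and>
     (\<forall>x\<in>frontier \<Omega>. \<exists>r \<phi>. local_defining_fun \<Omega> x r \<phi>)"

text \<open>Homogeneous Neumann condition: the derivative (up to the boundary) of w in
  the direction of the outward normal (a positive multiple of grad phi) vanishes.\<close>
definition neumann_bc :: "'a::euclidean_space set \<Rightarrow> ('a \<Rightarrow> real) \<Rightarrow> bool" where
  "neumann_bc \<Omega> w \<longleftrightarrow>
     (\<forall>x\<in>frontier \<Omega>. \<forall>r \<phi>. local_defining_fun \<Omega> x r \<phi> \<longrightarrow>
        frechet_derivative w (at x within closure \<Omega>) (grad \<phi> x) = 0)"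

definition C2_C1bar :: "'a::euclidean_space set \<Rightarrow> ('a \<Rightarrow> real) \<Rightarrow> bool" where
  "C2_C1bar \<Omega> w \<longleftrightarrow> Ck_on 2 \<Omega> w \<and> C1_upto (closure \<Omega>) w"

text \<open>w = A^{-1} g, i.e. w is the classical solution of -Delta w + beta w = g in Omega
  with homogeneous Neumann boundary condition.\<close>
definition neumann_resolvent :: "'a::euclidean_space set \<Rightarrow> real \<Rightarrow> ('a \<Rightarrow> real) \<Rightarrow> ('a \<Rightarrow> real) \<Rightarrow> bool" where
  "neumann_resolvent \<Omega> \<beta> g w \<longleftrightarrow>
     C2_C1bar \<Omega> w \<and> (\<forall>x\<in>\<Omega>. - lap w x + \<beta> * w x = g x) \<and> neumann_bc \<Omega> w"

definition dt :: "(real \<Rightarrow> 'a \<Rightarrow> real) \<Rightarrow> real \<Rightarrow> 'a \<Rightarrow> real" where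
  "dt w t x = deriv (\<lambda>s. w s x) t"

definition classical_reg :: "'a::euclidean_space set \<Rightarrow> (real \<Rightarrow> 'a \<Rightarrow> real) \<Rightarrow> bool" where
  "classical_reg \<Omega> w \<longleftrightarrow>
     continuous_on ({0..} \<times> closure \<Omega>) (\<lambda>(t, x). w t x) \<and>
     (\<forall>t>0. \<forall>x\<in>closure \<Omega>. (\<lambda>s. w s x) differentiable (at t)) \<and>
     continuous_on ({0<..} \<times> closure \<Omega>) (\<lambda>(t, x). dt w t x) \<and>
     (\<forall>t>0. C2_C1bar \<Omega> (w t))"

definition classical_solution_P ::
  "'a::euclidean_space set \<Rightarrow> real \<Rightarrow> real \<Rightarrow> (real \<Rightarrow> real) \<Rightarrow> (real \<Rightarrow> real) \<Rightarrow>
   (real \<Rightarrow> 'a \<Rightarrow> real) \<Rightarrow> (real \<Rightarrow> 'a \<Rightarrow> real) \<Rightarrow> (real \<Rightarrow> 'a \<Rightarrow> real) \<Rightarrow> bool" where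
  "classical_solution_P \<Omega> \<tau> \<beta> \<gamma> f u v n \<longleftrightarrow>
     classical_reg \<Omega> u \<and> classical_reg \<Omega> v \<and> classical_reg \<Omega> n \<and>
     (\<forall>t>0. C2_C1bar \<Omega> (\<lambda>x. u t x * \<gamma> (v t x))) \<and>
     (\<forall>t>0. \<forall>x\<in>\<Omega>.
        dt u t x = lap (\<lambda>y. u t y * \<gamma> (v t y)) x + u t x * f (n t x) \<and>
        \<tau> * dt v t x = lap (v t) x - \<beta> * v t x + u t x \<and>
        dt n t x = lap (n t) x - u t x * f (n t x)) \<and>
     (\<forall>t>0. neumann_bc \<Omega> (\<lambda>x. u t x * \<gamma> (v t x)) \<and> neumann_bc \<Omega> (v t) \<and>
            neumann_bc \<Omega> (n t))"

definition assumption_A1 :: "(real \<Rightarrow> real) \<Rightarrow> bool" where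
  "assumption_A1 \<gamma> \<longleftrightarrow>
     Ck_on 3 {0<..} \<gamma> \<and> (\<forall>s>0. \<gamma> s > 0) \<and>
     (\<forall>s>0. deriv \<gamma> s \<le> 0) \<and> (\<gamma> \<longlongrightarrow> 0) at_top"

definition assumption_F :: "(real \<Rightarrow> real) \<Rightarrow> bool" where
  "assumption_F f \<longleftrightarrow> C1_upto {0..} f \<and> f 0 = 0 \<and> (\<forall>s\<ge>0. f s \<ge> 0)"

definition Gamma_fun :: "(real \<Rightarrow> real) \<Rightarrow> real \<Rightarrow> real" where
  "Gamma_fun \<gamma> s = (LBINT \<eta>=1..s. \<gamma> \<eta>)"

definition gamma_star :: "(real \<Rightarrow> real) \<Rightarrow> real \<Rightarrow> real" where
  "gamma_star \<gamma> vstar = (SUP s\<in>{vstar..}. \<gamma> s)"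

end

(*
  Since d_t (u + n) = Lap (u gamma(v) + n) and S = A^-1 (u + n), the time derivative of S is
  controlled by W = u gamma(v) + n - (beta/A) Gamma(A S).  As gamma' <= 0, the chain rule gives
  Lap Gamma(A S) <= gamma(A S) A Lap S = gamma(A S) A (beta S - u - n); together with v >= A S,
  the bound n <= sup n(0) (parabolic maximum principle) and the monotonicity of
  Gamma(s) - s gamma(s), this yields -Lap W + beta W + d_t (u + n) <= K.  The elliptic maximum
  principle, applied to difference quotients of S in time, then shows that S is differentiable
  in t with d_t S + W <= K / beta.  Multiplying by B and using A S <= v <= B S gives the estimate.

  Both maximum principles are proved for the homogeneous Neumann condition on a domain given by
  local defining functions phi: at a boundary maximum one adds the barrier
  -eta (c phi(x) + |x - x0|^2), which pushes the maximum into the interior.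
*)
theory Submission
  imports Defs
begin

lemma frechet_derivative_eq_grad:
  fixes w :: "'a::euclidean_space \<Rightarrow> real"
  assumes "w differentiable (at x)"
  shows "frechet_derivative w (at x) h = grad w x \<bullet> h"
proof -
  have lin: "linear (frechet_derivative w (at x))"
    using assms frechet_derivative_works has_derivative_linear by blast
  have "frechet_derivative w (at x) h = frechet_derivative w (at x) (\<Sum>i\<in>Basis. (h \<bullet> i) *\<^sub>R i)"
    by (simp add: euclidean_representation)
  also have "\<dots> = (\<Sum>i\<in>Basis. (h \<bullet> i) * frechet_derivative w (at x) i)"
    using lin by (simp add: linear_sum linear_scale)
  also have "\<dots> = grad w x \<bullet> h"
    unfolding grad_def pd_def inner_sum_left by (simp add: inner_commute mult.commute)
  finally show ?thesis .
qed

lemma has_derivative_grad: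
  fixes w :: "'a::euclidean_space \<Rightarrow> real"
  assumes "w differentiable (at x)"
  shows "(w has_derivative (\<lambda>h. grad w x \<bullet> h)) (at x)"
proof -
  have "frechet_derivative w (at x) = (\<lambda>h. grad w x \<bullet> h)"
    using frechet_derivative_eq_grad[OF assms] by auto
  then show ?thesis using assms frechet_derivative_works by metis
qed

lemma pd_eq_derivative:
  fixes w :: "'a::euclidean_space \<Rightarrow> real"
  assumes "(w has_derivative D) (at x)"
  shows "pd i w x = D i"
  using assms frechet_derivative_at pd_def by metis

lemma pd_eq_grad_inner:
  fixes w :: "'a::euclidean_space \<Rightarrow> real"
  assumes "w differentiable (at x)"
  shows "pd i w x = grad w x \<bullet> i"
  using frechet_derivative_eq_grad[OF assms] by (simp add: pd_def)

lemma pd_cong_open: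
  assumes "open U" "x \<in> U" "\<And>y. y \<in> U \<Longrightarrow> f y = g y"
  shows "pd i f x = pd i g x"
proof -
  have "(f has_derivative D) (at x) \<longleftrightarrow> (g has_derivative D) (at x)" for D
    using has_derivative_transform_within_open[OF _ assms(1,2)] assms(3) by metis
  then show ?thesis unfolding pd_def frechet_derivative_def by simp
qed

lemma differentiable_cong_open:
  assumes "open U" "x \<in> U" "\<And>y. y \<in> U \<Longrightarrow> f y = g y" "f differentiable (at x)"
  shows "g differentiable (at x)"
  using assms has_derivative_transform_within_open unfolding differentiable_def by metis

lemma pd_lincomb:
  fixes f g :: "'a::euclidean_space \<Rightarrow> real"
  assumes "f differentiable (at x)" "g differentiable (at x)"
  shows "pd i (\<lambda>y. a * f y + b * g y) x = a * pd i f x + b * pd i g x"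
proof -
  have "((\<lambda>y. a * f y + b * g y) has_derivative (\<lambda>h. a * (grad f x \<bullet> h) + b * (grad g x \<bullet> h))) (at x)"
    using has_derivative_grad[OF assms(1)] has_derivative_grad[OF assms(2)]
    by (intro has_derivative_add has_derivative_mult_right)
  from pd_eq_derivative[OF this] show ?thesis
    using pd_eq_grad_inner[OF assms(1)] pd_eq_grad_inner[OF assms(2)] by simp
qed

definition twice_diff_on :: "'a::euclidean_space set \<Rightarrow> ('a \<Rightarrow> real) \<Rightarrow> bool" where
  "twice_diff_on U w \<longleftrightarrow>
     (\<forall>x\<in>U. w differentiable (at x)) \<and> (\<forall>i\<in>Basis. \<forall>x\<in>U. pd i w differentiable (at x))"

lemma twice_diff_on_subset: "twice_diff_on U w \<Longrightarrow> V \<subseteq> U \<Longrightarrow> twice_diff_on V w"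
  unfolding twice_diff_on_def by blast

lemma twice_diff_on_imp_continuous_on:
  assumes "open U" "twice_diff_on U w"
  shows "continuous_on U w"
  using assms unfolding twice_diff_on_def
  by (meson continuous_at_imp_continuous_on differentiable_imp_continuous_within)

lemma twice_diff_on_lincomb:
  assumes U: "open U" and f: "twice_diff_on U f" and g: "twice_diff_on U g"
  shows "twice_diff_on U (\<lambda>y. a * f y + b * g y)"
    and "x \<in> U \<Longrightarrow> lap (\<lambda>y. a * f y + b * g y) x = a * lap f x + b * lap g x"
proof -
  have fd: "\<And>x. x \<in> U \<Longrightarrow> f differentiable (at x)"
    and fdd: "\<And>i x. i \<in> Basis \<Longrightarrow> x \<in> U \<Longrightarrow> pd i f differentiable (at x)"
    and gd: "\<And>x. x \<in> U \<Longrightarrow> g differentiable (at x)"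
    and gdd: "\<And>i x. i \<in> Basis \<Longrightarrow> x \<in> U \<Longrightarrow> pd i g differentiable (at x)"
    using f g unfolding twice_diff_on_def by auto
  have pd_eq: "\<And>i y. y \<in> U \<Longrightarrow> a * pd i f y + b * pd i g y = pd i (\<lambda>y. a * f y + b * g y) y"
    by (simp add: pd_lincomb fd gd)
  have "pd i (\<lambda>y. a * f y + b * g y) differentiable (at x)" if "x \<in> U" "i \<in> Basis" for x i
    using differentiable_cong_open[OF U that(1) pd_eq] fdd[OF that(2,1)] gdd[OF that(2,1)]
    by (simp add: differentiable_add differentiable_mult)
  moreover have "(\<lambda>y. a * f y + b * g y) differentiable (at x)" if "x \<in> U" for x
    using fd[OF that] gd[OF that] by (simp add: differentiable_add differentiable_mult)
  ultimately show "twice_diff_on U (\<lambda>y. a * f y + b * g y)"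
    unfolding twice_diff_on_def by blast
  assume x: "x \<in> U"
  have "pd i (pd i (\<lambda>y. a * f y + b * g y)) x = a * pd i (pd i f) x + b * pd i (pd i g) x"
    if i: "i \<in> Basis" for i
    using pd_cong_open[OF U x pd_eq[symmetric]] pd_lincomb[OF fdd[OF i x] gdd[OF i x]] by simp
  then show "lap (\<lambda>y. a * f y + b * g y) x = a * lap f x + b * lap g x"
    unfolding lap_def by (simp add: sum.distrib sum_distrib_left)
qed

lemma twice_diff_on_add:
  "open U \<Longrightarrow> twice_diff_on U f \<Longrightarrow> twice_diff_on U g \<Longrightarrow> twice_diff_on U (\<lambda>y. f y + g y)"
  using twice_diff_on_lincomb(1)[of U f g 1 1] by simp

lemma lap_add:
  "open U \<Longrightarrow> twice_diff_on U f \<Longrightarrow> twice_diff_on U g \<Longrightarrow> x \<in> U \<Longrightarrow>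
     lap (\<lambda>y. f y + g y) x = lap f x + lap g x"
  using twice_diff_on_lincomb(2)[of U f g x 1 1] by simp

lemma has_derivative_dist_sq:
  "((\<lambda>y. (y - c) \<bullet> (y - c)) has_derivative (\<lambda>h. 2 * ((y - c) \<bullet> h))) (at y)"
proof -
  have "((\<lambda>y. (y - c) \<bullet> (y - c)) has_derivative (\<lambda>h. h \<bullet> (y - c) + (y - c) \<bullet> h)) (at y)"
    by (auto intro!: derivative_eq_intros)
  moreover have "(\<lambda>h. h \<bullet> (y - c) + (y - c) \<bullet> h) = (\<lambda>h. 2 * ((y - c) \<bullet> h))"
    by (auto simp: fun_eq_iff inner_commute)
  ultimately show ?thesis by simp
qed

lemma twice_diff_on_dist_sq:
  fixes c :: "'a::euclidean_space"
  shows "twice_diff_on U (\<lambda>y. (y - c) \<bullet> (y - c))"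
    and "lap (\<lambda>y. (y - c) \<bullet> (y - c)) y = 2 * DIM('a)"
proof -
  have pd_sq: "pd i (\<lambda>y. (y - c) \<bullet> (y - c)) = (\<lambda>y. 2 * ((y - c) \<bullet> i))" for i
    using pd_eq_derivative[OF has_derivative_dist_sq] by blast
  have lin: "((\<lambda>y. 2 * ((y - c) \<bullet> i)) has_derivative (\<lambda>h. 2 * (h \<bullet> i))) (at y)" for i y
    by (auto intro!: derivative_eq_intros)
  show "twice_diff_on U (\<lambda>y. (y - c) \<bullet> (y - c))"
    unfolding twice_diff_on_def pd_sq using has_derivative_dist_sq lin differentiable_def by blast
  have "pd i (pd i (\<lambda>y. (y - c) \<bullet> (y - c))) y = 2" if "i \<in> Basis" for i
    unfolding pd_sq using pd_eq_derivative[OF lin] that by simp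
  then show "lap (\<lambda>y. (y - c) \<bullet> (y - c)) y = 2 * DIM('a)"
    unfolding lap_def by simp
qed

lemma has_derivative_comp_real:
  fixes w :: "'a::euclidean_space \<Rightarrow> real"
  assumes "w differentiable (at y)" "(F has_real_derivative c) (at (w y))"
  shows "((\<lambda>y. F (w y)) has_derivative (\<lambda>h. c * (grad w y \<bullet> h))) (at y)"
proof -
  have "(\<lambda>x. c * x) = (\<lambda>x. x * c)" by (auto simp: fun_eq_iff)
  then have "(F has_derivative (\<lambda>x. x * c)) (at (w y) within range w)"
    using assms(2) has_derivative_at_withinI unfolding has_field_derivative_def by metis
  from has_derivative_in_compose[OF has_derivative_grad[OF assms(1)] this] show ?thesis
    by (simp add: mult.commute)
qed

lemma twice_diff_on_comp:
  fixes w :: "'a::euclidean_space \<Rightarrow> real"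
  assumes U: "open U" and w: "twice_diff_on U w"
    and G: "\<And>y. y \<in> U \<Longrightarrow> (G has_real_derivative g (w y)) (at (w y))"
    and g: "\<And>y. y \<in> U \<Longrightarrow> (g has_real_derivative g' (w y)) (at (w y))"
  shows "twice_diff_on U (\<lambda>y. G (w y))"
    and "y \<in> U \<Longrightarrow> lap (\<lambda>y. G (w y)) y = g' (w y) * (\<Sum>i\<in>Basis. (pd i w y)\<^sup>2) + g (w y) * lap w y"
proof -
  have wd: "\<And>y. y \<in> U \<Longrightarrow> w differentiable (at y)"
    and wdd: "\<And>i y. i \<in> Basis \<Longrightarrow> y \<in> U \<Longrightarrow> pd i w differentiable (at y)"
    using w unfolding twice_diff_on_def by auto
  have Gd: "((\<lambda>y. G (w y)) has_derivative (\<lambda>h. g (w y) * (grad w y \<bullet> h))) (at y)" if "y \<in> U" for y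
    using has_derivative_comp_real[OF wd[OF that] G[OF that]] .
  have pd_G: "pd i (\<lambda>y. G (w y)) y = g (w y) * pd i w y" if "y \<in> U" for i y
    using pd_eq_derivative[OF Gd[OF that]] pd_eq_grad_inner[OF wd[OF that]] by simp
  have pd_G_deriv: "((\<lambda>y. g (w y) * pd i w y) has_derivative
      (\<lambda>h. g (w y) * (grad (pd i w) y \<bullet> h) + g' (w y) * (grad w y \<bullet> h) * pd i w y)) (at y)"
    if "y \<in> U" "i \<in> Basis" for i y
    using has_derivative_mult[OF has_derivative_comp_real[OF wd[OF that(1)] g[OF that(1)]]
        has_derivative_grad[OF wdd[OF that(2,1)]]] by simp
  have "pd i (\<lambda>y. G (w y)) differentiable (at y)" if "y \<in> U" "i \<in> Basis" for i y
  proof (rule differentiable_cong_open[OF U that(1)])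
    show "g (w z) * pd i w z = pd i (\<lambda>y. G (w y)) z" if "z \<in> U" for z
      using pd_G[OF that] by simp
    show "(\<lambda>y. g (w y) * pd i w y) differentiable (at y)"
      using pd_G_deriv[OF that] unfolding differentiable_def by blast
  qed
  then show "twice_diff_on U (\<lambda>y. G (w y))"
    unfolding twice_diff_on_def using Gd differentiable_def by blast
  assume y: "y \<in> U"
  have "pd i (pd i (\<lambda>y. G (w y))) y = g' (w y) * (pd i w y)\<^sup>2 + g (w y) * pd i (pd i w) y"
    if i: "i \<in> Basis" for i
  proof -
    have "pd i (pd i (\<lambda>y. G (w y))) y = pd i (\<lambda>y. g (w y) * pd i w y) y"
      by (rule pd_cong_open[OF U y]) (simp add: pd_G)
    also have "\<dots> = g (w y) * pd i (pd i w) y + g' (w y) * pd i w y * pd i w y"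
      using pd_eq_derivative[OF pd_G_deriv[OF y i]] pd_eq_grad_inner[OF wdd[OF i y]]
        pd_eq_grad_inner[OF wd[OF y]] by simp
    finally show ?thesis by (simp add: power2_eq_square algebra_simps)
  qed
  then show "lap (\<lambda>y. G (w y)) y = g' (w y) * (\<Sum>i\<in>Basis. (pd i w y)\<^sup>2) + g (w y) * lap w y"
    unfolding lap_def by (simp add: sum.distrib sum_distrib_left)
qed

lemma Ck_on_differentiable: "Ck_on k U w \<Longrightarrow> 0 < k \<Longrightarrow> y \<in> U \<Longrightarrow> w differentiable (at y)"
  unfolding Ck_on_def by (drule spec[of _ "[]"]) simp

lemma Ck_on_pd_differentiable:
  "Ck_on k U w \<Longrightarrow> 1 < k \<Longrightarrow> i \<in> Basis \<Longrightarrow> y \<in> U \<Longrightarrow> pd i w differentiable (at y)"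
  unfolding Ck_on_def by (drule spec[of _ "[i]"]) simp

lemma Ck_on_pd_continuous: "Ck_on k U w \<Longrightarrow> 0 < k \<Longrightarrow> i \<in> Basis \<Longrightarrow> continuous_on U (pd i w)"
  unfolding Ck_on_def by (drule spec[of _ "[i]"]) simp

lemma Ck_on_pd_pd_continuous:
  "Ck_on k U w \<Longrightarrow> 1 < k \<Longrightarrow> i \<in> Basis \<Longrightarrow> j \<in> Basis \<Longrightarrow> continuous_on U (pd j (pd i w))"
  unfolding Ck_on_def by (drule spec[of _ "[j, i]"]) simp

lemma Ck_on_twice_diff_on: "Ck_on k U w \<Longrightarrow> 1 < k \<Longrightarrow> twice_diff_on U w"
  unfolding twice_diff_on_def using Ck_on_differentiable Ck_on_pd_differentiable by fastforce

lemma smooth_on_subset: "smooth_on U w \<Longrightarrow> V \<subseteq> U \<Longrightarrow> smooth_on V w"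
  unfolding smooth_on_def Ck_on_def by (meson continuous_on_subset subsetD)

lemma smooth_on_grad_continuous: "smooth_on U w \<Longrightarrow> continuous_on U (grad w)"
  unfolding grad_def[abs_def] smooth_on_def
  by (intro continuous_on_sum continuous_on_scaleR continuous_on_const)
    (auto intro: Ck_on_pd_continuous[of 1])

lemma smooth_on_lap_continuous: "smooth_on U w \<Longrightarrow> continuous_on U (lap w)"
  unfolding lap_def[abs_def] smooth_on_def
  by (intro continuous_on_sum) (auto intro: Ck_on_pd_pd_continuous[of 2])

lemma C2_C1bar_twice_diff_on: "C2_C1bar \<Omega> w \<Longrightarrow> twice_diff_on \<Omega> w"
  unfolding C2_C1bar_def using Ck_on_twice_diff_on by fastforce

lemma C2_C1bar_continuous_on: "C2_C1bar \<Omega> w \<Longrightarrow> continuous_on (closure \<Omega>) w"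
  unfolding C2_C1bar_def C1_upto_def
  by (meson differentiable_imp_continuous_on differentiable_on_def)

lemma local_defining_funD:
  assumes "local_defining_fun \<Omega> x r \<phi>"
  shows "r > 0" "smooth_on (ball x r) \<phi>" "\<And>y. y \<in> ball x r \<Longrightarrow> grad \<phi> y \<noteq> 0"
    "\<And>y. y \<in> ball x r \<Longrightarrow> y \<in> \<Omega> \<longleftrightarrow> \<phi> y < 0"
  using assms unfolding local_defining_fun_def by blast+

lemma local_defining_fun_differentiable:
  "local_defining_fun \<Omega> x r \<phi> \<Longrightarrow> y \<in> ball x r \<Longrightarrow> \<phi> differentiable (at y)"
  using local_defining_funD(2) Ck_on_differentiable[of 1] unfolding smooth_on_def by fastforce

lemma local_defining_fun_subball:
  assumes "local_defining_fun \<Omega> x r \<phi>" "r' > 0" "ball y r' \<subseteq> ball x r"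
  shows "local_defining_fun \<Omega> y r' \<phi>"
  using assms local_defining_funD[OF assms(1)] smooth_on_subset unfolding local_defining_fun_def
  by blast

lemma frontier_open: "open \<Omega> \<Longrightarrow> x \<in> closure \<Omega> \<Longrightarrow> x \<notin> \<Omega> \<Longrightarrow> x \<in> frontier \<Omega>"
  by (simp add: frontier_def interior_open)

lemma local_defining_fun_zero_on_frontier:
  assumes "open \<Omega>" "x \<in> frontier \<Omega>" "local_defining_fun \<Omega> x r \<phi>"
  shows "\<phi> x = 0"
proof -
  note L = local_defining_funD[OF assms(3)]
  have xb: "x \<in> ball x r" using L(1) by simp
  have "x \<notin> \<Omega>" using assms(1,2) by (simp add: frontier_def interior_open)
  then have "\<phi> x \<ge> 0" using L(4)[OF xb] by simp
  moreover have "\<phi> x \<le> 0"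
  proof (rule ccontr)
    assume "\<not> \<phi> x \<le> 0"
    have "isCont \<phi> x"
      using local_defining_fun_differentiable[OF assms(3) xb] differentiable_imp_continuous_within by blast
    then have "eventually (\<lambda>y. 0 < \<phi> y) (at x)"
      using \<open>\<not> \<phi> x \<le> 0\<close> by (auto simp: isCont_def intro: order_tendstoD(1))
    moreover have "eventually (\<lambda>y. y \<in> ball x r) (at x)"
      using L(1) by (intro eventually_at_in_open') auto
    ultimately have "eventually (\<lambda>y. 0 < \<phi> y \<and> y \<in> ball x r) (at x)"
      by (rule eventually_conj)
    moreover have "\<exists>\<^sub>F y in at x. y \<in> \<Omega>"
      using assms(2) \<open>x \<notin> \<Omega>\<close> by (simp add: frontier_def closure_def islimpt_iff_eventually frequently_def)
    ultimately have "\<exists>\<^sub>F y in at x. y \<in> \<Omega> \<and> 0 < \<phi> y \<and> y \<in> ball x r"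
      using frequently_eventually_frequently by blast
    then show False using L(4) by (auto dest: frequently_ex)
  qed
  ultimately show ?thesis by simp
qed

lemma has_real_derivative_along_line:
  fixes G :: "'a::euclidean_space \<Rightarrow> real"
  assumes "G differentiable (at (x + s *\<^sub>R i))"
  shows "((\<lambda>s. G (x + s *\<^sub>R i)) has_real_derivative pd i G (x + s *\<^sub>R i)) (at s)"
proof -
  have "((\<lambda>s::real. x + s *\<^sub>R i) has_derivative (\<lambda>s. s *\<^sub>R i)) (at s)"
    by (auto intro!: derivative_eq_intros)
  from has_derivative_in_compose[OF this has_derivative_at_withinI[OF has_derivative_grad[OF assms]]]
  have "((\<lambda>s. G (x + s *\<^sub>R i)) has_derivative (\<lambda>t. t * (grad G (x + s *\<^sub>R i) \<bullet> i))) (at s)"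
    by (simp add: mult.commute)
  moreover have "(\<lambda>t. t * (grad G (x + s *\<^sub>R i) \<bullet> i)) = (*) (pd i G (x + s *\<^sub>R i))"
    using pd_eq_grad_inner[OF assms, of i] by (auto simp: fun_eq_iff)
  ultimately show ?thesis unfolding has_field_derivative_def by simp
qed

lemma second_derivative_nonpos_at_max:
  fixes g g' :: "real \<Rightarrow> real"
  assumes \<delta>: "\<delta> > 0" and g: "\<And>s. \<bar>s\<bar> < \<delta> \<Longrightarrow> (g has_real_derivative g' s) (at s)"
    and g': "(g' has_real_derivative c) (at 0)" and max: "\<And>s. \<bar>s\<bar> < \<delta> \<Longrightarrow> g s \<le> g 0"
  shows "c \<le> 0"
proof (rule ccontr)
  assume "\<not> c \<le> 0"
  have "g' 0 = 0"
    by (rule DERIV_local_max[OF g[of 0] \<delta>]) (use \<delta> max in auto)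
  obtain d where d: "d > 0" "\<And>h. h > 0 \<Longrightarrow> h < d \<Longrightarrow> g' 0 < g' (0 + h)"
    using DERIV_pos_inc_right[OF g'] \<open>\<not> c \<le> 0\<close> by force
  define h where "h = min d \<delta> / 2"
  have h: "0 < h" "h < d" "h < \<delta>" using d(1) \<delta> by (auto simp: h_def)
  obtain z where z: "0 < z" "z < h" "g h - g 0 = (h - 0) * g' z"
    using MVT2[OF h(1), of g g'] g h by force
  have "g' z > 0" using d(2)[of z] z h \<open>g' 0 = 0\<close> by simp
  then have "g h > g 0" using z(3) h(1) by (simp add: algebra_simps)
  then show False using max[of h] h by simp
qed

lemma lap_nonpos_at_max:
  fixes F :: "'a::euclidean_space \<Rightarrow> real"
  assumes U: "open U" and x: "x \<in> U" and max: "\<And>y. y \<in> U \<Longrightarrow> F y \<le> F x"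
    and F: "twice_diff_on U F"
  shows "lap F x \<le> 0"
  unfolding lap_def
proof (rule sum_nonpos)
  fix i :: 'a assume i: "i \<in> Basis"
  obtain \<delta> where \<delta>: "\<delta> > 0" "ball x \<delta> \<subseteq> U" using U x open_contains_ball by blast
  have line: "x + s *\<^sub>R i \<in> U" if "\<bar>s\<bar> < \<delta>" for s
    using that \<delta>(2) i by (auto simp: dist_norm)
  have "((\<lambda>s. F (x + s *\<^sub>R i)) has_real_derivative pd i F (x + s *\<^sub>R i)) (at s)" if "\<bar>s\<bar> < \<delta>" for s
    using has_real_derivative_along_line F line[OF that] unfolding twice_diff_on_def by blast
  moreover have "((\<lambda>s. pd i F (x + s *\<^sub>R i)) has_real_derivative pd i (pd i F) x) (at 0)"
    using has_real_derivative_along_line[of "pd i F" x 0 i] F x i unfolding twice_diff_on_def by simp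
  ultimately show "pd i (pd i F) x \<le> 0"
    using second_derivative_nonpos_at_max[OF \<delta>(1)] max line by force
qed

lemma has_derivative_pos_slope_right:
  fixes F :: "real \<Rightarrow> real"
  assumes "(F has_derivative (\<lambda>s. s * c)) (at 0 within {0..e})" "c > 0" "e > 0"
  shows "\<exists>s. 0 < s \<and> s \<le> e \<and> F 0 < F s"
proof -
  obtain d where d: "d > 0" "\<And>x. x \<in> {0..e} \<Longrightarrow> 0 < norm x \<Longrightarrow> norm x < d \<Longrightarrow>
      norm (F x - F 0 - x * c) / norm x < c / 2"
    using assms(1,2) unfolding has_derivative_within' by (metis diff_zero half_gt_zero)
  define s where "s = min e (d/2)"
  have s: "0 < s" "s \<le> e" "s < d" using d(1) assms(3) by (auto simp: s_def)
  then have "\<bar>F s - F 0 - s * c\<bar> < c / 2 * s"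
    using d(2)[of s] by (simp add: divide_less_eq)
  then have "F s - F 0 > s * c - c / 2 * s" by linarith
  moreover have "s * c - c / 2 * s > 0" using s(1) assms(2) by simp
  ultimately show ?thesis using s by force
qed

lemma defining_fun_neg_along_inward_normal:
  assumes \<Omega>: "open \<Omega>" and y: "y \<in> frontier \<Omega>" and ldf: "local_defining_fun \<Omega> y r \<phi>"
  obtains \<delta> where "\<delta> > 0" "\<And>h. h > 0 \<Longrightarrow> h < \<delta> \<Longrightarrow> \<phi> (y - h *\<^sub>R grad \<phi> y) < 0"
proof -
  define d where "d = grad \<phi> y"
  have yb: "y \<in> ball y r" using local_defining_funD(1)[OF ldf] by simp
  have line: "((\<lambda>s::real. y - s *\<^sub>R d) has_derivative (\<lambda>s. - (s *\<^sub>R d))) (at 0)"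
    by (auto intro!: derivative_eq_intros)
  have "(\<phi> has_derivative (\<lambda>h. d \<bullet> h)) (at y)"
    using has_derivative_grad[OF local_defining_fun_differentiable[OF ldf yb]] d_def by simp
  then have "(\<phi> has_derivative (\<lambda>h. d \<bullet> h))
      (at ((\<lambda>s::real. y - s *\<^sub>R d) 0) within range (\<lambda>s::real. y - s *\<^sub>R d))"
    by (simp add: has_derivative_at_withinI)
  from has_derivative_in_compose[OF line this]
  have "((\<lambda>s. \<phi> (y - s *\<^sub>R d)) has_derivative (\<lambda>s. d \<bullet> (- (s *\<^sub>R d)))) (at 0)"
    by simp
  moreover have "(\<lambda>s. d \<bullet> (- (s *\<^sub>R d))) = (*) (- (d \<bullet> d))" by (auto simp: fun_eq_iff)
  ultimately have "((\<lambda>s. \<phi> (y - s *\<^sub>R d)) has_real_derivative - (d \<bullet> d)) (at 0)"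
    unfolding has_field_derivative_def by simp
  moreover have "- (d \<bullet> d) < 0" using local_defining_funD(3)[OF ldf yb] d_def by simp
  ultimately have "\<exists>\<delta>>0. \<forall>h>0. h < \<delta> \<longrightarrow> \<phi> (y - (0 + h) *\<^sub>R d) < \<phi> (y - 0 *\<^sub>R d)"
    by (rule DERIV_neg_dec_right)
  then show ?thesis
    using that local_defining_fun_zero_on_frontier[OF \<Omega> y ldf] by (auto simp: d_def)
qed

lemma inward_normal_segment:
  assumes \<Omega>: "open \<Omega>" and y: "y \<in> frontier \<Omega>" and ldf: "local_defining_fun \<Omega> y r \<phi>"
    and \<rho>: "\<rho> > 0"
  obtains e where "e > 0" "\<And>s. s \<in> {0..e} \<Longrightarrow> y - s *\<^sub>R grad \<phi> y \<in> closure \<Omega> \<inter> ball y \<rho>"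
proof -
  define d where "d = grad \<phi> y"
  note L = local_defining_funD[OF ldf]
  have "d \<noteq> 0" using L(1,3) d_def by simp
  obtain \<delta> where \<delta>: "\<delta> > 0" "\<And>h. h > 0 \<Longrightarrow> h < \<delta> \<Longrightarrow> \<phi> (y - h *\<^sub>R d) < 0"
    using defining_fun_neg_along_inward_normal[OF \<Omega> y ldf] d_def by blast
  define e where "e = min (\<delta>/2) (min r \<rho> / (2 * norm d))"
  have "e > 0" using \<delta> L(1) \<rho> \<open>d \<noteq> 0\<close> by (simp add: e_def)
  moreover have "y - s *\<^sub>R d \<in> closure \<Omega> \<inter> ball y \<rho>" if s: "s \<in> {0..e}" for s
  proof -
    have "norm (s *\<^sub>R d) = s * norm d" using s by simp
    also have "\<dots> \<le> min r \<rho> / (2 * norm d) * norm d"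
      using s by (intro mult_right_mono) (auto simp: e_def)
    also have "\<dots> = min r \<rho> / 2" using \<open>d \<noteq> 0\<close> by simp
    finally have "norm (s *\<^sub>R d) \<le> min r \<rho> / 2" .
    then have in_balls: "y - s *\<^sub>R d \<in> ball y r" "y - s *\<^sub>R d \<in> ball y \<rho>"
      using \<rho> L(1) by (simp_all add: dist_norm)
    have "y - s *\<^sub>R d \<in> closure \<Omega>"
    proof (cases "s = 0")
      case True
      then show ?thesis using y by (simp add: frontier_def)
    next
      case False
      then have "\<phi> (y - s *\<^sub>R d) < 0" using \<delta>(2)[of s] s \<delta>(1) by (simp add: e_def)
      then show ?thesis using L(4)[OF in_balls(1)] closure_subset by blast
    qed
    then show ?thesis using in_balls(2) by simp
  qed
  ultimately show ?thesis using that d_def by blast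
qed

lemma normal_derivative_nonneg_at_max:
  fixes w q \<phi> :: "'a::euclidean_space \<Rightarrow> real"
  assumes \<Omega>: "open \<Omega>" and y: "y \<in> frontier \<Omega>" and ldf: "local_defining_fun \<Omega> y r \<phi>"
    and w: "(w has_derivative D) (at y within closure \<Omega>)" and D: "D (grad \<phi> y) = 0"
    and q: "(q has_derivative Q) (at y)"
    and \<rho>: "\<rho> > 0" and max: "\<forall>z\<in>closure \<Omega> \<inter> ball y \<rho>. w z + q z \<le> w y + q y"
  shows "Q (grad \<phi> y) \<ge> 0"
proof (rule ccontr)
  assume neg: "\<not> Q (grad \<phi> y) \<ge> 0"
  define d where "d = grad \<phi> y"
  obtain e where e: "e > 0" and seg: "\<And>s. s \<in> {0..e} \<Longrightarrow> y - s *\<^sub>R d \<in> closure \<Omega> \<inter> ball y \<rho>"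
    using inward_normal_segment[OF \<Omega> y ldf \<rho>] d_def by blast
  have line: "((\<lambda>s::real. y - s *\<^sub>R d) has_derivative (\<lambda>s. - (s *\<^sub>R d))) (at 0 within {0..e})"
    by (auto intro!: derivative_eq_intros)
  have "(\<lambda>s. y - s *\<^sub>R d) ` {0..e} \<subseteq> closure \<Omega>" using seg by blast
  then have "(w has_derivative D) (at ((\<lambda>s. y - s *\<^sub>R d) 0) within (\<lambda>s. y - s *\<^sub>R d) ` {0..e})"
    using has_derivative_subset[OF w] by simp
  from has_derivative_in_compose[OF line this]
  have "((\<lambda>s. w (y - s *\<^sub>R d)) has_derivative (\<lambda>s. D (- (s *\<^sub>R d)))) (at 0 within {0..e})" .
  moreover have "(q has_derivative Q) (at ((\<lambda>s. y - s *\<^sub>R d) 0) within (\<lambda>s. y - s *\<^sub>R d) ` {0..e})"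
    using q by (simp add: has_derivative_at_withinI)
  from has_derivative_in_compose[OF line this]
  have "((\<lambda>s. q (y - s *\<^sub>R d)) has_derivative (\<lambda>s. Q (- (s *\<^sub>R d)))) (at 0 within {0..e})" .
  ultimately have "((\<lambda>s. w (y - s *\<^sub>R d) + q (y - s *\<^sub>R d)) has_derivative
      (\<lambda>s. D (- (s *\<^sub>R d)) + Q (- (s *\<^sub>R d)))) (at 0 within {0..e})"
    by (rule has_derivative_add)
  moreover have "(\<lambda>s. D (- (s *\<^sub>R d)) + Q (- (s *\<^sub>R d))) = (\<lambda>s. s * (- Q d))"
    using has_derivative_linear[OF w] has_derivative_linear[OF q] D d_def
    by (simp add: fun_eq_iff linear_scale linear_neg)
  ultimately have slope: "((\<lambda>s. w (y - s *\<^sub>R d) + q (y - s *\<^sub>R d)) has_derivative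
      (\<lambda>s. s * (- Q d))) (at 0 within {0..e})"
    by simp
  have "- Q d > 0" using neg d_def by simp
  from has_derivative_pos_slope_right[OF slope this e] obtain s
    where s: "0 < s" "s \<le> e" "w y + q y < w (y - s *\<^sub>R d) + q (y - s *\<^sub>R d)"
    by auto
  have "w (y - s *\<^sub>R d) + q (y - s *\<^sub>R d) \<le> w y + q y"
    using max seg[of s] s(1,2) by simp
  then show False using s(3) by simp
qed

section \<open>A barrier at a boundary point\<close>

lemma lipschitz_from_gradient_bound:
  fixes \<psi> :: "'a::euclidean_space \<Rightarrow> real"
  assumes "convex S" "\<And>z. z \<in> S \<Longrightarrow> (\<psi> has_derivative (\<lambda>h. a z \<bullet> h)) (at z)"
    "\<And>z. z \<in> S \<Longrightarrow> norm (a z) \<le> B" "x \<in> S" "y \<in> S"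
  shows "\<bar>\<psi> x - \<psi> y\<bar> \<le> B * norm (x - y)"
proof -
  have "onorm (\<lambda>h. a z \<bullet> h) \<le> B" if "z \<in> S" for z
  proof (rule onorm_le)
    fix h
    have "norm (a z \<bullet> h) \<le> norm (a z) * norm h" by (simp add: Cauchy_Schwarz_ineq2)
    also have "\<dots> \<le> B * norm h" using assms(3)[OF that] by (simp add: mult_right_mono)
    finally show "norm (a z \<bullet> h) \<le> B * norm h" .
  qed
  then show ?thesis
    using differentiable_bound[OF assms(1) has_derivative_at_withinI[OF assms(2)] _ assms(4,5)] by simp
qed

text \<open>Added to a function with a maximum at the boundary point \<open>x0\<close>, the barrier vanishes at \<open>x0\<close>,
  is \<open>\<le> - \<eta> r\<^sup>2 / 2\<close> on the sphere of radius \<open>r\<close> and has negative derivative along the outer normal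
  \<open>grad \<phi>\<close> at nearby boundary points; so a Neumann function plus the barrier attains its maximum
  over \<open>closure \<Omega> \<inter> cball x0 r\<close> in the interior, where its Laplacian is controlled.\<close>
definition barrier :: "('a::euclidean_space \<Rightarrow> real) \<Rightarrow> 'a \<Rightarrow> real \<Rightarrow> real \<Rightarrow> 'a \<Rightarrow> real" where
  "barrier \<phi> x0 c \<eta> z = - \<eta> * (c * \<phi> z + (z - x0) \<bullet> (z - x0))"

lemma barrier_eq_lincomb:
  "barrier \<phi> x0 c \<eta> = (\<lambda>z. (- \<eta> * c) * \<phi> z + (- \<eta>) * ((z - x0) \<bullet> (z - x0)))"
  by (auto simp: barrier_def fun_eq_iff algebra_simps)

locale boundary_chart =
  fixes \<Omega> :: "'a::euclidean_space set" and x0 :: 'a and r0 R :: real and \<phi> :: "'a \<Rightarrow> real"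
  assumes open_domain: "open \<Omega>"
    and boundary_point: "x0 \<in> frontier \<Omega>"
    and defining_fun: "local_defining_fun \<Omega> x0 r0 \<phi>"
    and radius: "R > 0" "cball x0 R \<subseteq> ball x0 r0"
    and grad_close: "\<And>y. y \<in> cball x0 R \<Longrightarrow> norm (grad \<phi> y - grad \<phi> x0) \<le> norm (grad \<phi> x0) / 32"

lemma boundary_chart_exists:
  assumes "open \<Omega>" "x0 \<in> frontier \<Omega>" "local_defining_fun \<Omega> x0 r0 \<phi>"
  obtains R where "boundary_chart \<Omega> x0 r0 R \<phi>"
proof -
  note L = local_defining_funD[OF assms(3)]
  have x0: "x0 \<in> ball x0 r0" using L(1) by simp
  have "norm (grad \<phi> x0) / 32 > 0" using L(3)[OF x0] by simp
  moreover have "isCont (grad \<phi>) x0"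
    using smooth_on_grad_continuous[OF L(2)] continuous_on_eq_continuous_at[OF open_ball] x0 by blast
  ultimately obtain R1 where R1: "R1 > 0"
    "\<And>y. dist y x0 < R1 \<Longrightarrow> dist (grad \<phi> y) (grad \<phi> x0) < norm (grad \<phi> x0) / 32"
    unfolding continuous_at_eps_delta by blast
  define R where "R = min (R1/2) (r0/2)"
  have "R > 0" "cball x0 R \<subseteq> ball x0 r0" using R1 L(1) by (auto simp: R_def)
  moreover have "norm (grad \<phi> y - grad \<phi> x0) \<le> norm (grad \<phi> x0) / 32" if "y \<in> cball x0 R" for y
  proof -
    have "dist y x0 < R1" using that R1(1) by (auto simp: R_def dist_commute)
    then show ?thesis using R1(2) by (simp add: dist_norm less_imp_le)
  qed
  ultimately have "boundary_chart \<Omega> x0 r0 R \<phi>"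
    using assms unfolding boundary_chart_def by blast
  then show ?thesis by (rule that)
qed

context boundary_chart
begin

text \<open>\<open>lip\<close> bounds the gradient of \<open>\<phi>\<close> on \<open>cball x0 R\<close>; weighting \<open>\<phi>\<close> by \<open>r / (2 * lip)\<close>
  keeps the \<open>\<phi>\<close>-term of the barrier below \<open>r\<^sup>2 / 2\<close> on \<open>cball x0 r\<close>.\<close>
definition lip :: real where "lip = 33 / 32 * norm (grad \<phi> x0)"

definition lap_sup :: real where "lap_sup = (SUP y\<in>cball x0 R. \<bar>lap \<phi> y\<bar>)"

definition barrier_lap_const :: real where "barrier_lap_const = R / (2 * lip) * lap_sup + 2 * DIM('a)"

abbreviation q :: "real \<Rightarrow> real \<Rightarrow> 'a \<Rightarrow> real" where
  "q r \<eta> \<equiv> barrier \<phi> x0 (r / (2 * lip)) \<eta>"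

lemma grad_nonzero: "grad \<phi> x0 \<noteq> 0"
  using local_defining_funD(1,3)[OF defining_fun] by simp

lemma lip_pos: "lip > 0"
  using grad_nonzero by (simp add: lip_def)

lemma phi_center: "\<phi> x0 = 0"
  by (rule local_defining_fun_zero_on_frontier[OF open_domain boundary_point defining_fun])

lemma phi_has_derivative: "z \<in> cball x0 R \<Longrightarrow> (\<phi> has_derivative (\<lambda>h. grad \<phi> z \<bullet> h)) (at z)"
  using has_derivative_grad local_defining_fun_differentiable[OF defining_fun] radius by blast

lemma norm_grad_bounds:
  assumes "y \<in> cball x0 R"
  shows "norm (grad \<phi> y) \<le> lip" "31 / 32 * norm (grad \<phi> x0) \<le> norm (grad \<phi> y)"
  using grad_close[OF assms] norm_triangle_sub[of "grad \<phi> y" "grad \<phi> x0"]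
    norm_triangle_ineq2[of "grad \<phi> x0" "grad \<phi> y"]
  by (auto simp: lip_def norm_minus_commute)

lemma phi_abs_le:
  assumes "y \<in> cball x0 R"
  shows "\<bar>\<phi> y\<bar> \<le> lip * norm (y - x0)"
proof -
  have "\<bar>\<phi> y - \<phi> x0\<bar> \<le> lip * norm (y - x0)"
    by (rule lipschitz_from_gradient_bound[OF convex_cball phi_has_derivative norm_grad_bounds(1)])
      (use assms radius(1) in auto)
  then show ?thesis using phi_center by simp
qed

lemma lap_sup_bound: "y \<in> cball x0 R \<Longrightarrow> \<bar>lap \<phi> y\<bar> \<le> lap_sup"
proof -
  have "continuous_on (cball x0 R) (\<lambda>y. \<bar>lap \<phi> y\<bar>)"
    using continuous_on_subset[OF smooth_on_lap_continuous[OF local_defining_funD(2)[OF defining_fun]]]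
      radius(2) by (intro continuous_intros) auto
  then have "bounded ((\<lambda>y. \<bar>lap \<phi> y\<bar>) ` cball x0 R)"
    by (simp add: compact_imp_bounded compact_continuous_image)
  then show "y \<in> cball x0 R \<Longrightarrow> \<bar>lap \<phi> y\<bar> \<le> lap_sup"
    unfolding lap_sup_def by (intro cSUP_upper bounded_imp_bdd_above) auto
qed

lemma barrier_lap_const_nonneg: "barrier_lap_const \<ge> 0"
  using lap_sup_bound[of x0] radius(1) lip_pos unfolding barrier_lap_const_def
  by (intro add_nonneg_nonneg mult_nonneg_nonneg) auto

lemma barrier_center: "q r \<eta> x0 = 0"
  by (simp add: barrier_def phi_center)

lemma phi_term_bound:
  assumes "0 < r" "r \<le> R" "y \<in> cball x0 r"
  shows "\<bar>r / (2 * lip) * \<phi> y\<bar> \<le> r\<^sup>2 / 2"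
proof -
  have c: "r / (2 * lip) > 0" using assms(1) lip_pos by simp
  have "\<bar>\<phi> y\<bar> \<le> lip * norm (y - x0)" using phi_abs_le assms by auto
  also have "\<dots> \<le> lip * r"
    using assms(3) lip_pos by (intro mult_left_mono) (auto simp: dist_norm norm_minus_commute)
  finally have "r / (2 * lip) * \<bar>\<phi> y\<bar> \<le> r / (2 * lip) * (lip * r)"
    using c by (intro mult_left_mono) auto
  also have "\<dots> = r\<^sup>2 / 2" using lip_pos by (simp add: power2_eq_square)
  finally show ?thesis by (simp only: abs_mult abs_of_pos[OF c])
qed

lemma barrier_le:
  assumes "0 < r" "r \<le> R" "0 < \<eta>" "y \<in> cball x0 r"
  shows "q r \<eta> y \<le> \<eta> * r\<^sup>2 / 2"
proof -
  have "- (r / (2 * lip) * \<phi> y + (y - x0) \<bullet> (y - x0)) \<le> r\<^sup>2 / 2"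
    using phi_term_bound[OF assms(1,2,4)] inner_ge_zero[of "y - x0"] by linarith
  then have "\<eta> * - (r / (2 * lip) * \<phi> y + (y - x0) \<bullet> (y - x0)) \<le> \<eta> * (r\<^sup>2 / 2)"
    using assms(3) by (intro mult_left_mono) auto
  then show ?thesis by (simp add: barrier_def algebra_simps)
qed

lemma barrier_on_sphere:
  assumes "0 < r" "r \<le> R" "0 < \<eta>" "dist x0 y = r"
  shows "q r \<eta> y \<le> - (\<eta> * r\<^sup>2 / 2)"
proof -
  have "(y - x0) \<bullet> (y - x0) = r\<^sup>2"
    using assms(4) by (simp add: dist_norm norm_minus_commute power2_norm_eq_inner[symmetric])
  moreover have "\<bar>r / (2 * lip) * \<phi> y\<bar> \<le> r\<^sup>2 / 2"
    using phi_term_bound[OF assms(1,2)] assms(4) by simp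
  ultimately have "r\<^sup>2 / 2 \<le> r / (2 * lip) * \<phi> y + (y - x0) \<bullet> (y - x0)"
    by linarith
  then have "\<eta> * (r\<^sup>2 / 2) \<le> \<eta> * (r / (2 * lip) * \<phi> y + (y - x0) \<bullet> (y - x0))"
    using assms(3) by (intro mult_left_mono) auto
  then show ?thesis by (simp add: barrier_def algebra_simps)
qed

end

context boundary_chart
begin

lemma defining_fun_at_nearby_point:
  assumes "y \<in> cball x0 R"
  obtains r' where "local_defining_fun \<Omega> y r' \<phi>"
proof
  have "dist x0 y < r0" using assms radius(2) by auto
  moreover have "ball y (r0 - dist x0 y) \<subseteq> ball x0 r0"
    by (auto simp: subset_eq) (metis dist_triangle add.commute less_diff_eq order.strict_trans1)
  ultimately show "local_defining_fun \<Omega> y (r0 - dist x0 y) \<phi>"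
    by (intro local_defining_fun_subball[OF defining_fun]) auto
qed

lemma barrier_has_derivative:
  assumes "y \<in> cball x0 R"
  shows "(barrier \<phi> x0 c \<eta> has_derivative
      (\<lambda>h. - \<eta> * (c * (grad \<phi> y \<bullet> h) + 2 * ((y - x0) \<bullet> h)))) (at y)"
  unfolding barrier_def
  by (intro has_derivative_mult_right has_derivative_add phi_has_derivative[OF assms]
      has_derivative_dist_sq)

lemma boundary_chord_nearly_tangent:
  assumes y: "y \<in> frontier \<Omega>" "y \<in> cball x0 R"
  shows "\<bar>grad \<phi> y \<bullet> (y - x0)\<bar> \<le> norm (grad \<phi> x0) / 16 * norm (y - x0)"
proof -
  define d where "d = grad \<phi> y"
  have deriv: "((\<lambda>z. \<phi> z - d \<bullet> z) has_derivative (\<lambda>h. (grad \<phi> z - d) \<bullet> h)) (at z)"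
    if "z \<in> cball x0 R" for z
  proof -
    have "((\<lambda>z. \<phi> z - d \<bullet> z) has_derivative (\<lambda>h. grad \<phi> z \<bullet> h - d \<bullet> h)) (at z)"
      by (rule has_derivative_diff[OF phi_has_derivative[OF that]]) (auto intro!: derivative_eq_intros)
    then show ?thesis by (simp add: inner_diff_left)
  qed
  have bound: "norm (grad \<phi> z - d) \<le> norm (grad \<phi> x0) / 16" if "z \<in> cball x0 R" for z
  proof -
    have "norm (grad \<phi> z - d) \<le> norm (grad \<phi> z - grad \<phi> x0) + norm (grad \<phi> x0 - d)"
      by (rule norm_diff_triangle_le[of _ "grad \<phi> x0"]) simp_all
    also have "norm (grad \<phi> x0 - d) = norm (grad \<phi> y - grad \<phi> x0)"
      by (simp add: d_def norm_minus_commute)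
    finally show ?thesis using grad_close[OF that] grad_close[OF y(2)] by simp
  qed
  have "x0 \<in> cball x0 R" using radius(1) by simp
  from lipschitz_from_gradient_bound[OF convex_cball deriv bound y(2) this]
  have "\<bar>(\<phi> y - d \<bullet> y) - (\<phi> x0 - d \<bullet> x0)\<bar> \<le> norm (grad \<phi> x0) / 16 * norm (y - x0)" .
  moreover obtain r' where "local_defining_fun \<Omega> y r' \<phi>" using defining_fun_at_nearby_point[OF y(2)] .
  then have "\<phi> y = 0" using local_defining_fun_zero_on_frontier open_domain y(1) by blast
  moreover have "(\<phi> y - d \<bullet> y) - (\<phi> x0 - d \<bullet> x0) = \<phi> y - d \<bullet> (y - x0)"
    using phi_center by (simp add: inner_diff_right)
  ultimately show ?thesis by (simp add: d_def)
qed

lemma barrier_normal_derivative_neg: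
  assumes r: "0 < r" "r \<le> R" and \<eta>: "0 < \<eta>" and y: "y \<in> frontier \<Omega>" "y \<in> cball x0 r"
  shows "- \<eta> * (r / (2 * lip) * (grad \<phi> y \<bullet> grad \<phi> y) + 2 * ((y - x0) \<bullet> grad \<phi> y)) < 0"
proof -
  define g0 where "g0 = norm (grad \<phi> x0)"
  have g0: "g0 > 0" using grad_nonzero by (simp add: g0_def)
  have yR: "y \<in> cball x0 R" using y r by auto
  have "\<bar>(y - x0) \<bullet> grad \<phi> y\<bar> \<le> g0 / 16 * norm (y - x0)"
    using boundary_chord_nearly_tangent[OF y(1) yR] by (simp add: g0_def inner_commute)
  also have "\<dots> \<le> g0 / 16 * r"
    using y(2) g0 by (intro mult_left_mono) (auto simp: dist_norm norm_minus_commute)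
  finally have small: "\<bar>(y - x0) \<bullet> grad \<phi> y\<bar> \<le> g0 / 16 * r" .
  have "(31 / 32 * g0)\<^sup>2 \<le> (norm (grad \<phi> y))\<^sup>2"
    using norm_grad_bounds(2)[OF yR] g0 by (simp add: g0_def power_mono)
  then have "r / (2 * lip) * (31 / 32 * g0)\<^sup>2 \<le> r / (2 * lip) * (grad \<phi> y \<bullet> grad \<phi> y)"
    using r lip_pos by (intro mult_left_mono) (auto simp: power2_norm_eq_inner)
  moreover have "r / (2 * lip) * (31 / 32 * g0)\<^sup>2 = 961 / 2112 * (g0 * r)"
    using g0 by (simp add: lip_def g0_def[symmetric] power2_eq_square field_simps)
  moreover have "g0 / 16 * r = 1 / 16 * (g0 * r)" by simp
  moreover have "g0 * r > 0" using g0 r by simp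
  ultimately have "0 < r / (2 * lip) * (grad \<phi> y \<bullet> grad \<phi> y) + 2 * ((y - x0) \<bullet> grad \<phi> y)"
    using small by linarith
  then show ?thesis using \<eta> by (simp add: mult_pos_pos)
qed

lemma twice_diff_on_phi: "twice_diff_on (ball x0 R) \<phi>"
proof -
  have "smooth_on (ball x0 R) \<phi>"
    using smooth_on_subset[OF local_defining_funD(2)[OF defining_fun]] radius(2) ball_subset_cball
    by blast
  then show ?thesis using Ck_on_twice_diff_on[of 2 "ball x0 R" \<phi>] by (simp add: smooth_on_def)
qed

lemma twice_diff_on_barrier: "twice_diff_on (ball x0 R) (barrier \<phi> x0 c \<eta>)"
  unfolding barrier_eq_lincomb
  by (rule twice_diff_on_lincomb(1)[OF open_ball twice_diff_on_phi twice_diff_on_dist_sq(1)])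

lemma lap_barrier_ge:
  assumes "0 < r" "r \<le> R" "0 < \<eta>" "y \<in> ball x0 R"
  shows "lap (q r \<eta>) y \<ge> - \<eta> * barrier_lap_const"
proof -
  have "lap (q r \<eta>) y = (- \<eta> * (r / (2 * lip))) * lap \<phi> y + (- \<eta>) * lap (\<lambda>z. (z - x0) \<bullet> (z - x0)) y"
    unfolding barrier_eq_lincomb
    by (rule twice_diff_on_lincomb(2)[OF open_ball twice_diff_on_phi twice_diff_on_dist_sq(1) assms(4)])
  then have "lap (q r \<eta>) y = - \<eta> * (r / (2 * lip) * lap \<phi> y + 2 * DIM('a))"
    unfolding twice_diff_on_dist_sq(2) by (simp add: algebra_simps)
  moreover have "r / (2 * lip) * lap \<phi> y \<le> R / (2 * lip) * lap_sup"
  proof -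
    have "r / (2 * lip) * lap \<phi> y \<le> r / (2 * lip) * lap_sup"
      using lap_sup_bound[of y] assms lip_pos by (intro mult_left_mono) auto
    also have "\<dots> \<le> R / (2 * lip) * lap_sup"
      using lap_sup_bound[of x0] assms lip_pos radius(1)
      by (intro mult_right_mono divide_right_mono) auto
    finally show ?thesis .
  qed
  then have "\<eta> * (r / (2 * lip) * lap \<phi> y + 2 * DIM('a)) \<le> \<eta> * barrier_lap_const"
    using assms(3) unfolding barrier_lap_const_def by (intro mult_left_mono) auto
  ultimately show ?thesis by simp
qed

end

text \<open>Unlike \<^const>\<open>neumann_bc\<close>, this form asserts differentiability up to the boundary, so it is
  closed under linear combinations and compositions.\<close>
definition neumann_differentiable :: "'a::euclidean_space set \<Rightarrow> ('a \<Rightarrow> real) \<Rightarrow> bool" where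
  "neumann_differentiable \<Omega> w \<longleftrightarrow>
     (\<forall>x\<in>frontier \<Omega>. \<forall>r \<phi>. local_defining_fun \<Omega> x r \<phi> \<longrightarrow>
        (\<exists>D. (w has_derivative D) (at x within closure \<Omega>) \<and> D (grad \<phi> x) = 0))"

lemma neumann_differentiableD:
  "neumann_differentiable \<Omega> w \<Longrightarrow> x \<in> frontier \<Omega> \<Longrightarrow> local_defining_fun \<Omega> x r \<phi> \<Longrightarrow>
     \<exists>D. (w has_derivative D) (at x within closure \<Omega>) \<and> D (grad \<phi> x) = 0"
  unfolding neumann_differentiable_def by blast

lemma neumann_differentiable_if_neumann_bc:
  assumes "C2_C1bar \<Omega> w" "neumann_bc \<Omega> w"
  shows "neumann_differentiable \<Omega> w"
  unfolding neumann_differentiable_def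
proof (intro ballI allI impI)
  fix x r \<phi> assume x: "x \<in> frontier \<Omega>" and l: "local_defining_fun \<Omega> x r \<phi>"
  have "w differentiable (at x within closure \<Omega>)"
    using assms(1) x unfolding C2_C1bar_def C1_upto_def frontier_def by blast
  then show "\<exists>D. (w has_derivative D) (at x within closure \<Omega>) \<and> D (grad \<phi> x) = 0"
    using assms(2) x l frechet_derivative_works unfolding neumann_bc_def by blast
qed

lemma neumann_differentiable_lincomb:
  assumes "neumann_differentiable \<Omega> f" "neumann_differentiable \<Omega> g"
  shows "neumann_differentiable \<Omega> (\<lambda>y. a * f y + b * g y)"
  unfolding neumann_differentiable_def
proof (intro ballI allI impI)
  fix x r \<phi> assume "x \<in> frontier \<Omega>" "local_defining_fun \<Omega> x r \<phi>"
  then obtain Df Dg where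
    "(f has_derivative Df) (at x within closure \<Omega>)" "Df (grad \<phi> x) = 0"
    "(g has_derivative Dg) (at x within closure \<Omega>)" "Dg (grad \<phi> x) = 0"
    using assms neumann_differentiableD by metis
  then show "\<exists>D. ((\<lambda>y. a * f y + b * g y) has_derivative D) (at x within closure \<Omega>) \<and> D (grad \<phi> x) = 0"
    by (intro exI[of _ "\<lambda>h. a * Df h + b * Dg h"]) (auto intro: has_derivative_add has_derivative_mult_right)
qed

lemma neumann_differentiable_comp:
  assumes w: "neumann_differentiable \<Omega> w"
    and G: "\<And>x. x \<in> frontier \<Omega> \<Longrightarrow> (G has_real_derivative g x) (at (w x))"
  shows "neumann_differentiable \<Omega> (\<lambda>y. G (w y))"
  unfolding neumann_differentiable_def
proof (intro ballI allI impI)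
  fix x r \<phi> assume x: "x \<in> frontier \<Omega>" and "local_defining_fun \<Omega> x r \<phi>"
  then obtain D where D: "(w has_derivative D) (at x within closure \<Omega>)" "D (grad \<phi> x) = 0"
    using w neumann_differentiableD by blast
  have "(\<lambda>z. z * g x) = (*) (g x)" by (auto simp: fun_eq_iff)
  then have "(G has_derivative (\<lambda>z. z * g x)) (at (w x) within w ` closure \<Omega>)"
    using G[OF x] has_derivative_at_withinI unfolding has_field_derivative_def by metis
  from has_derivative_in_compose[OF D(1) this] D(2)
  show "\<exists>D. ((\<lambda>y. G (w y)) has_derivative D) (at x within closure \<Omega>) \<and> D (grad \<phi> x) = 0"
    by auto
qed

context boundary_chart
begin

lemma penalized_max_in_domain:
  assumes w: "neumann_differentiable \<Omega> w"
    and r: "0 < r" "r \<le> R" and \<eta>: "0 < \<eta>"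
    and y: "y \<in> closure \<Omega>" "y \<in> cball x0 r"
    and max: "\<And>z. z \<in> closure \<Omega> \<Longrightarrow> z \<in> cball x0 r \<Longrightarrow> w z + q r \<eta> z \<le> w y + q r \<eta> y"
    and above: "q r \<eta> y > - (\<eta> * r\<^sup>2 / 2)"
  shows "y \<in> \<Omega> \<inter> ball x0 r"
proof -
  have yb: "y \<in> ball x0 r"
    using y(2) above barrier_on_sphere[OF r \<eta>, of y] by (cases "dist x0 y = r") auto
  have "y \<in> \<Omega>"
  proof (rule ccontr)
    assume "y \<notin> \<Omega>"
    then have fy: "y \<in> frontier \<Omega>" using frontier_open[OF open_domain y(1)] by blast
    have yR: "y \<in> cball x0 R" using y(2) r by auto
    obtain r' where ldf: "local_defining_fun \<Omega> y r' \<phi>" using defining_fun_at_nearby_point[OF yR] .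
    obtain D where D: "(w has_derivative D) (at y within closure \<Omega>)" "D (grad \<phi> y) = 0"
      using neumann_differentiableD[OF w fy ldf] by blast
    have "\<forall>z\<in>closure \<Omega> \<inter> ball y (r - dist x0 y). w z + q r \<eta> z \<le> w y + q r \<eta> y"
    proof
      fix z assume z: "z \<in> closure \<Omega> \<inter> ball y (r - dist x0 y)"
      have "dist x0 z \<le> dist x0 y + dist y z" by (rule dist_triangle)
      then show "w z + q r \<eta> z \<le> w y + q r \<eta> y" using z max by auto
    qed
    from normal_derivative_nonneg_at_max[OF open_domain fy ldf D barrier_has_derivative[OF yR] _ this]
    show False
      using yb barrier_normal_derivative_neg[OF r \<eta> fy y(2)] by (simp add: inner_commute)
  qed
  then show ?thesis using yb by simp
qed

lemma penalized_max_lap_le: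
  assumes w: "twice_diff_on \<Omega> w"
    and r: "0 < r" "r < R" and \<eta>: "0 < \<eta>"
    and y: "y \<in> \<Omega> \<inter> ball x0 r"
    and max: "\<And>z. z \<in> closure \<Omega> \<Longrightarrow> z \<in> cball x0 r \<Longrightarrow> w z + q r \<eta> z \<le> w y + q r \<eta> y"
  shows "lap w y \<le> \<eta> * barrier_lap_const"
proof -
  define U where "U = \<Omega> \<inter> ball x0 r"
  have U: "open U" "y \<in> U" "U \<subseteq> ball x0 R" using open_domain y r by (auto simp: U_def)
  have wU: "twice_diff_on U w" using twice_diff_on_subset[OF w] by (simp add: U_def)
  have qU: "twice_diff_on U (q r \<eta>)" using twice_diff_on_subset[OF twice_diff_on_barrier U(3)] .
  have "lap (\<lambda>z. w z + q r \<eta> z) y \<le> 0"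
    using max closure_subset[of \<Omega>]
    by (intro lap_nonpos_at_max[OF U(1,2) _ twice_diff_on_add[OF U(1) wU qU]]) (auto simp: U_def)
  moreover have "lap (\<lambda>z. w z + q r \<eta> z) y = lap w y + lap (q r \<eta>) y"
    by (rule lap_add[OF U(1) wU qU U(2)])
  moreover have "lap (q r \<eta>) y \<ge> - \<eta> * barrier_lap_const"
    using lap_barrier_ge[OF r(1) _ \<eta>] r y by auto
  ultimately show ?thesis by simp
qed

end

section \<open>Maximum principles under the Neumann condition\<close>

context boundary_chart
begin

lemma approximate_max_at_center:
  fixes w :: "'a \<Rightarrow> real"
  assumes bounded: "bounded \<Omega>"
    and w: "twice_diff_on \<Omega> w" "continuous_on (closure \<Omega>) w" "neumann_differentiable \<Omega> w"
    and max: "\<And>y. y \<in> closure \<Omega> \<Longrightarrow> w y \<le> w x0"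
    and \<epsilon>: "\<epsilon> > 0"
  obtains y where "y \<in> \<Omega>" "w y > w x0 - \<epsilon>" "lap w y \<le> \<epsilon>"
proof -
  have x0: "x0 \<in> closure \<Omega>" using boundary_point by (simp add: frontier_def)
  obtain \<rho> where \<rho>: "\<rho> > 0" "\<And>y. y \<in> closure \<Omega> \<Longrightarrow> dist y x0 < \<rho> \<Longrightarrow> dist (w y) (w x0) < \<epsilon>"
    using w(2) x0 \<epsilon> unfolding continuous_on_iff by blast
  define r where "r = min (R/2) (\<rho>/2)"
  have r: "0 < r" "r < R" "r < \<rho>" using radius(1) \<rho>(1) by (auto simp: r_def)
  define \<eta> where "\<eta> = \<epsilon> / (barrier_lap_const + 1)"
  have \<eta>: "\<eta> > 0" "\<eta> * barrier_lap_const \<le> \<epsilon>"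
    using \<epsilon> barrier_lap_const_nonneg by (auto simp: \<eta>_def field_simps)
  define N where "N = closure \<Omega> \<inter> cball x0 r"
  have "compact N" using bounded by (simp add: N_def compact_Int_closed compact_closure)
  moreover have "x0 \<in> N" using x0 r by (simp add: N_def)
  moreover have "N \<subseteq> ball x0 R" using r by (auto simp: N_def)
  then have "continuous_on N (\<lambda>z. w z + q r \<eta> z)"
    using continuous_on_subset[OF w(2)] continuous_on_subset[OF
        twice_diff_on_imp_continuous_on[OF open_ball twice_diff_on_barrier]]
    by (intro continuous_intros) (auto simp: N_def)
  ultimately obtain y where y: "y \<in> N" "\<And>z. z \<in> N \<Longrightarrow> w z + q r \<eta> z \<le> w y + q r \<eta> y"
    using continuous_attains_sup[of N] by blast
  have "q r \<eta> y \<ge> 0"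
    using y(2)[OF \<open>x0 \<in> N\<close>] max[of y] y(1) barrier_center by (simp add: N_def)
  moreover have "\<eta> * r\<^sup>2 / 2 > 0" using \<eta>(1) r(1) by simp
  ultimately have "q r \<eta> y > - (\<eta> * r\<^sup>2 / 2)" by linarith
  then have y_in: "y \<in> \<Omega> \<inter> ball x0 r"
    using penalized_max_in_domain[OF w(3) r(1) _ \<eta>(1)] y r by (auto simp: N_def)
  moreover have "lap w y \<le> \<epsilon>"
    using penalized_max_lap_le[OF w(1) r(1,2) \<eta>(1) y_in] y \<eta>(2) by (auto simp: N_def)
  moreover have "dist y x0 < \<rho>" using y_in r by (simp add: dist_commute)
  then have "dist (w y) (w x0) < \<epsilon>" using \<rho>(2) y(1) by (simp add: N_def)
  then have "w y > w x0 - \<epsilon>" by (simp add: dist_real_def)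
  ultimately show ?thesis using that by blast
qed

end

lemma approximate_max_in_domain:
  fixes w :: "'a::euclidean_space \<Rightarrow> real"
  assumes \<Omega>: "open \<Omega>" "bounded \<Omega>" and charts: "\<forall>x\<in>frontier \<Omega>. \<exists>r \<phi>. local_defining_fun \<Omega> x r \<phi>"
    and w: "twice_diff_on \<Omega> w" "continuous_on (closure \<Omega>) w" "neumann_differentiable \<Omega> w"
    and x1: "x1 \<in> closure \<Omega>" "\<And>y. y \<in> closure \<Omega> \<Longrightarrow> w y \<le> w x1"
    and \<epsilon>: "\<epsilon> > 0"
  obtains y where "y \<in> \<Omega>" "w y > w x1 - \<epsilon>" "lap w y \<le> \<epsilon>"
proof (cases "x1 \<in> \<Omega>")
  case True
  have "lap w x1 \<le> 0"
    using x1(2) closure_subset by (intro lap_nonpos_at_max[OF \<Omega>(1) True _ w(1)]) blast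
  then show ?thesis using that[OF True] \<epsilon> by simp
next
  case False
  then have x1_frontier: "x1 \<in> frontier \<Omega>" using frontier_open[OF \<Omega>(1) x1(1)] by blast
  then obtain r0 \<phi> where "local_defining_fun \<Omega> x1 r0 \<phi>" using charts by blast
  then obtain R where "boundary_chart \<Omega> x1 r0 R \<phi>"
    using boundary_chart_exists[OF \<Omega>(1) x1_frontier] by blast
  from boundary_chart.approximate_max_at_center[OF this \<Omega>(2) w x1(2) \<epsilon>] that show ?thesis by blast
qed

lemma elliptic_max_principle:
  fixes w :: "'a::euclidean_space \<Rightarrow> real"
  assumes \<Omega>: "open \<Omega>" "bounded \<Omega>" and charts: "\<forall>x\<in>frontier \<Omega>. \<exists>r \<phi>. local_defining_fun \<Omega> x r \<phi>"
    and \<beta>: "\<beta> > 0"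
    and w: "twice_diff_on \<Omega> w" "continuous_on (closure \<Omega>) w" "neumann_differentiable \<Omega> w"
    and ineq: "\<And>x. x \<in> \<Omega> \<Longrightarrow> - lap w x + \<beta> * w x \<le> K"
    and z: "z \<in> closure \<Omega>"
  shows "w z \<le> K / \<beta>"
proof -
  have "compact (closure \<Omega>)" "closure \<Omega> \<noteq> {}" using \<Omega>(2) z by auto
  then obtain x1 where x1: "x1 \<in> closure \<Omega>" "\<And>y. y \<in> closure \<Omega> \<Longrightarrow> w y \<le> w x1"
    using continuous_attains_sup[OF _ _ w(2)] by blast
  have main: "\<beta> * w x1 \<le> K + \<epsilon> * (\<beta> + 1)" if \<epsilon>: "\<epsilon> > 0" for \<epsilon>
  proof -
    obtain y where y: "y \<in> \<Omega>" "w y > w x1 - \<epsilon>" "lap w y \<le> \<epsilon>"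
      using approximate_max_in_domain[OF \<Omega> charts w x1 \<epsilon>] .
    have "\<beta> * (w x1 - \<epsilon>) \<le> \<beta> * w y" using y(2) \<beta> by simp
    then show ?thesis using ineq[OF y(1)] y(3) by (simp add: algebra_simps)
  qed
  have "\<beta> * w x1 \<le> K"
  proof (rule field_le_epsilon)
    fix e :: real assume "e > 0"
    then have "\<beta> * w x1 \<le> K + e / (\<beta> + 1) * (\<beta> + 1)" using \<beta> by (intro main) simp
    then show "\<beta> * w x1 \<le> K + e" using \<beta> by simp
  qed
  moreover have "\<beta> * w z \<le> \<beta> * w x1" using x1(2)[OF z] \<beta> by (intro mult_left_mono) auto
  ultimately have "\<beta> * w z \<le> K" by linarith
  then show ?thesis using \<beta> by (simp add: pos_le_divide_eq mult.commute)
qed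

lemma deriv_nonneg_at_left_max:
  fixes f :: "real \<Rightarrow> real"
  assumes "(f has_real_derivative c) (at t)" "\<delta> > 0" "\<And>s. t - \<delta> < s \<Longrightarrow> s < t \<Longrightarrow> f s \<le> f t"
  shows "c \<ge> 0"
proof (rule ccontr)
  assume "\<not> c \<ge> 0"
  then obtain d where d: "d > 0" "\<And>h. h > 0 \<Longrightarrow> h < d \<Longrightarrow> f t < f (t - h)"
    using DERIV_neg_dec_left[OF assms(1)] by force
  define h where "h = min d \<delta> / 2"
  have "h > 0" "h < d" "h < \<delta>" using d(1) assms(2) by (auto simp: h_def)
  then show False using d(2)[of h] assms(3)[of "t - h"] by simp
qed

context boundary_chart
begin

lemma space_time_max_exists:
  fixes n :: "real \<Rightarrow> 'a \<Rightarrow> real" and g :: "real \<Rightarrow> real"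
  assumes bounded: "bounded \<Omega>" and cont: "continuous_on ({0..} \<times> closure \<Omega>) (\<lambda>(t, x). n t x)"
    and g: "continuous_on {a..b} g" and ab: "0 \<le> a" "a \<le> b" and r: "0 < r" "r < R"
  obtains t2 y where "t2 \<in> {a..b}" "y \<in> closure \<Omega>" "y \<in> cball x0 r"
    "\<And>s x. s \<in> {a..b} \<Longrightarrow> x \<in> closure \<Omega> \<Longrightarrow> x \<in> cball x0 r \<Longrightarrow>
       n s x + g s + q r \<eta> x \<le> n t2 y + g t2 + q r \<eta> y"
proof -
  define Q where "Q = {a..b} \<times> (closure \<Omega> \<inter> cball x0 r)"
  have "continuous_on Q (\<lambda>p. n (fst p) (snd p))"
    by (rule continuous_on_subset[of "{0..} \<times> closure \<Omega>"])
      (use cont ab in \<open>auto simp: case_prod_beta' Q_def\<close>)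
  moreover have "continuous_on Q (\<lambda>p. g (fst p))"
    by (rule continuous_on_compose2[OF g continuous_on_fst]) (auto simp: Q_def)
  moreover have "continuous_on Q (\<lambda>p. q r \<eta> (snd p))"
    by (rule continuous_on_compose2[OF twice_diff_on_imp_continuous_on[OF open_ball
          twice_diff_on_barrier] continuous_on_snd]) (use r in \<open>auto simp: Q_def\<close>)
  ultimately have "continuous_on Q (\<lambda>p. n (fst p) (snd p) + g (fst p) + q r \<eta> (snd p))"
    by (intro continuous_on_add)
  moreover have "compact Q" using bounded
    by (auto simp: Q_def intro!: compact_Times compact_Int_closed)
  moreover have "Q \<noteq> {}" using r ab boundary_point by (auto simp: Q_def frontier_def)
  ultimately obtain p where "p \<in> Q"
    "\<And>p'. p' \<in> Q \<Longrightarrow> n (fst p') (snd p') + g (fst p') + q r \<eta> (snd p')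
       \<le> n (fst p) (snd p) + g (fst p) + q r \<eta> (snd p)"
    using continuous_attains_sup[of Q] by blast
  then show ?thesis using that[of "fst p" "snd p"] by (auto simp: Q_def)
qed

lemma parabolic_max_not_at_boundary:
  fixes n :: "real \<Rightarrow> 'a \<Rightarrow> real"
  assumes bounded: "bounded \<Omega>"
    and cont: "continuous_on ({0..} \<times> closure \<Omega>) (\<lambda>(t, x). n t x)"
    and twice: "\<And>t. t > 0 \<Longrightarrow> twice_diff_on \<Omega> (n t)"
    and neumann: "\<And>t. t > 0 \<Longrightarrow> neumann_differentiable \<Omega> (n t)"
    and dn: "\<And>t x. t > 0 \<Longrightarrow> x \<in> \<Omega> \<Longrightarrow> ((\<lambda>s. n s x) has_real_derivative dt n t x) (at t)"
    and ineq: "\<And>t x. t > 0 \<Longrightarrow> x \<in> \<Omega> \<Longrightarrow> dt n t x \<le> lap (n t) x"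
    and \<epsilon>: "\<epsilon> > 0" and t1: "t1 > 0"
    and max: "\<And>s x. s \<in> {0..t1} \<Longrightarrow> x \<in> closure \<Omega> \<Longrightarrow> n s x - \<epsilon> * s \<le> n t1 x0 - \<epsilon> * t1"
  shows False
proof -
  define r where "r = min (R/2) (t1/2)"
  have r: "0 < r" "r < R" "r \<le> t1" using radius(1) t1 by (auto simp: r_def)
  define \<eta> where "\<eta> = \<epsilon> / (2 * r + barrier_lap_const + 1)"
  have \<eta>: "\<eta> > 0" "\<eta> * (2 * r + barrier_lap_const) < \<epsilon>"
    using \<epsilon> r barrier_lap_const_nonneg by (auto simp: \<eta>_def field_simps)
  \<comment> \<open>the term \<open>\<eta> (s - t1)\<^sup>2\<close> keeps the maximum away from the bottom of the time window\<close>
  define g where "g s = - \<epsilon> * s - \<eta> * (s - t1)\<^sup>2" for s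
  have "continuous_on {t1 - r..t1} g" unfolding g_def by (intro continuous_intros)
  then obtain t2 y where "t2 \<in> {t1 - r..t1}" and y: "y \<in> closure \<Omega>" "y \<in> cball x0 r"
    and Fmax: "\<And>s x. s \<in> {t1 - r..t1} \<Longrightarrow> x \<in> closure \<Omega> \<Longrightarrow> x \<in> cball x0 r \<Longrightarrow>
       n s x + g s + q r \<eta> x \<le> n t2 y + g t2 + q r \<eta> y"
    by (rule space_time_max_exists[OF bounded cont _ _ _ r(1,2)]) (use r in auto)
  then have t2: "t1 - r \<le> t2" "t2 \<le> t1" by auto
  have x0: "x0 \<in> closure \<Omega>" using boundary_point by (simp add: frontier_def)
  have F_ge: "n t1 x0 - \<epsilon> * t1 \<le> n t2 y - \<epsilon> * t2 + q r \<eta> y - \<eta> * (t2 - t1)\<^sup>2"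
    using Fmax[of t1 x0] x0 r barrier_center by (simp add: g_def)
  have G_le: "n t2 y - \<epsilon> * t2 \<le> n t1 x0 - \<epsilon> * t1" using max t2 r y by simp
  have "\<eta> * r\<^sup>2 / 2 > 0" using \<eta> r by simp
  have "t2 > t1 - r"
  proof (rule ccontr)
    assume "\<not> t2 > t1 - r"
    then have "t2 = t1 - r" using t2 by simp
    then have "\<eta> * (t2 - t1)\<^sup>2 = \<eta> * r\<^sup>2" by (simp add: power2_eq_square)
    moreover have "q r \<eta> y \<le> \<eta> * r\<^sup>2 / 2" using barrier_le[OF r(1) _ \<eta>(1) y(2)] r by simp
    ultimately show False using F_ge G_le \<open>\<eta> * r\<^sup>2 / 2 > 0\<close> by linarith
  qed
  then have "t2 > 0" using r by simp
  have space_max: "n t2 x + q r \<eta> x \<le> n t2 y + q r \<eta> y" if "x \<in> closure \<Omega>" "x \<in> cball x0 r" for x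
    using Fmax[of t2 x] that t2 by simp
  have "\<eta> * (t2 - t1)\<^sup>2 \<ge> 0" using \<eta> by simp
  then have "q r \<eta> y > - (\<eta> * r\<^sup>2 / 2)"
    using F_ge G_le \<open>\<eta> * r\<^sup>2 / 2 > 0\<close> by linarith
  then have y_in: "y \<in> \<Omega> \<inter> ball x0 r"
    using penalized_max_in_domain[OF neumann[OF \<open>t2 > 0\<close>] r(1) _ \<eta>(1) y space_max] r by simp
  have "lap (n t2) y \<le> \<eta> * barrier_lap_const"
    using penalized_max_lap_le[OF twice[OF \<open>t2 > 0\<close>] r(1,2) \<eta>(1) y_in space_max] .
  moreover have "dt n t2 y - \<epsilon> - \<eta> * (2 * (t2 - t1)) \<ge> 0"
  proof (rule deriv_nonneg_at_left_max)
    show "((\<lambda>s. n s y + g s + q r \<eta> y) has_real_derivative dt n t2 y - \<epsilon> - \<eta> * (2 * (t2 - t1)))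
        (at t2)"
      unfolding g_def using dn[OF \<open>t2 > 0\<close>] y_in by (auto intro!: derivative_eq_intros)
    show "t2 - (t1 - r) > 0" using \<open>t2 > t1 - r\<close> by simp
    show "n s y + g s + q r \<eta> y \<le> n t2 y + g t2 + q r \<eta> y" if "t2 - (t2 - (t1 - r)) < s" "s < t2" for s
      using Fmax[of s y] that t2 y by simp
  qed
  moreover have "\<eta> * (2 * (- r)) \<le> \<eta> * (2 * (t2 - t1))" using t2 \<eta> by (intro mult_left_mono) auto
  moreover have "dt n t2 y \<le> lap (n t2) y" using ineq[OF \<open>t2 > 0\<close>] y_in by simp
  ultimately show False using \<eta>(2) by (simp add: algebra_simps)
qed

end

lemma parabolic_max_not_inside:
  fixes n :: "real \<Rightarrow> 'a::euclidean_space \<Rightarrow> real"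
  assumes \<Omega>: "open \<Omega>" and twice: "twice_diff_on \<Omega> (n t1)"
    and dn: "((\<lambda>s. n s x1) has_real_derivative dt n t1 x1) (at t1)"
    and ineq: "dt n t1 x1 \<le> lap (n t1) x1"
    and \<epsilon>: "\<epsilon> > 0" and t1: "t1 > 0" and x1: "x1 \<in> \<Omega>"
    and max: "\<And>s x. s \<in> {0..t1} \<Longrightarrow> x \<in> \<Omega> \<Longrightarrow> n s x - \<epsilon> * s \<le> n t1 x1 - \<epsilon> * t1"
  shows False
proof -
  have "dt n t1 x1 - \<epsilon> \<ge> 0"
  proof (rule deriv_nonneg_at_left_max[OF _ t1])
    show "((\<lambda>s. n s x1 - \<epsilon> * s) has_real_derivative dt n t1 x1 - \<epsilon>) (at t1)"
      using dn by (auto intro!: derivative_eq_intros)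
    show "n s x1 - \<epsilon> * s \<le> n t1 x1 - \<epsilon> * t1" if "t1 - t1 < s" "s < t1" for s
      using max that x1 by simp
  qed
  moreover have "lap (n t1) x1 \<le> 0"
    using max[of t1] t1 by (intro lap_nonpos_at_max[OF \<Omega> x1 _ twice]) simp
  ultimately show False using ineq \<epsilon> by simp
qed

lemma parabolic_max_principle:
  fixes n :: "real \<Rightarrow> 'a::euclidean_space \<Rightarrow> real"
  assumes \<Omega>: "open \<Omega>" "bounded \<Omega>" and charts: "\<forall>x\<in>frontier \<Omega>. \<exists>r \<phi>. local_defining_fun \<Omega> x r \<phi>"
    and cont: "continuous_on ({0..} \<times> closure \<Omega>) (\<lambda>(t, x). n t x)"
    and twice: "\<And>t. t > 0 \<Longrightarrow> twice_diff_on \<Omega> (n t)"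
    and neumann: "\<And>t. t > 0 \<Longrightarrow> neumann_differentiable \<Omega> (n t)"
    and dn: "\<And>t x. t > 0 \<Longrightarrow> x \<in> \<Omega> \<Longrightarrow> ((\<lambda>s. n s x) has_real_derivative dt n t x) (at t)"
    and ineq: "\<And>t x. t > 0 \<Longrightarrow> x \<in> \<Omega> \<Longrightarrow> dt n t x \<le> lap (n t) x"
    and M0: "\<And>x. x \<in> closure \<Omega> \<Longrightarrow> n 0 x \<le> M0"
    and T: "T \<ge> 0" and z: "z \<in> closure \<Omega>"
  shows "n T z \<le> M0"
proof (rule ccontr)
  assume "\<not> n T z \<le> M0"
  define \<epsilon> where "\<epsilon> = (n T z - M0) / (2 * (T + 1))"
  have \<epsilon>_pos: "\<epsilon> > 0" using \<open>\<not> n T z \<le> M0\<close> T by (simp add: \<epsilon>_def)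
  have "\<epsilon> * T < \<epsilon> * (2 * (T + 1))" using \<epsilon>_pos T by simp
  also have "\<dots> = n T z - M0" using T by (simp add: \<epsilon>_def)
  finally have \<epsilon>: "\<epsilon> > 0" "\<epsilon> * T < n T z - M0" using \<epsilon>_pos by auto
  define Q where "Q = {0..T} \<times> closure \<Omega>"
  have "compact Q" "(T, z) \<in> Q" using \<Omega>(2) T z by (auto simp: Q_def compact_Times)
  moreover have "continuous_on Q (\<lambda>(t, x). n t x)"
    by (rule continuous_on_subset[OF cont]) (auto simp: Q_def)
  then have "continuous_on Q (\<lambda>(t, x). n t x - \<epsilon> * t)"
    by (simp add: case_prod_beta' continuous_intros)
  ultimately obtain t1 x1 where tx1: "(t1, x1) \<in> Q"
    and max: "\<And>s x. (s, x) \<in> Q \<Longrightarrow> n s x - \<epsilon> * s \<le> n t1 x1 - \<epsilon> * t1"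
    using continuous_attains_sup[of Q "\<lambda>(t, x). n t x - \<epsilon> * t"] by fastforce
  have t1: "0 \<le> t1" "t1 \<le> T" and x1: "x1 \<in> closure \<Omega>" using tx1 by (auto simp: Q_def)
  have "t1 > 0"
    using max[of T z] \<open>(T, z) \<in> Q\<close> M0[OF x1] \<epsilon> t1 by (cases "t1 = 0") auto
  have max_t1: "\<And>s x. s \<in> {0..t1} \<Longrightarrow> x \<in> closure \<Omega> \<Longrightarrow> n s x - \<epsilon> * s \<le> n t1 x1 - \<epsilon> * t1"
    using max t1 by (simp add: Q_def)
  show False
  proof (cases "x1 \<in> \<Omega>")
    case True
    then show False
      using parabolic_max_not_inside[OF \<Omega>(1) twice dn ineq \<epsilon>(1) \<open>t1 > 0\<close> True] max_t1 closure_subset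
      by (meson \<open>t1 > 0\<close> subsetD)
  next
    case False
    then have x1_frontier: "x1 \<in> frontier \<Omega>" using frontier_open[OF \<Omega>(1) x1] by blast
    then obtain r0 \<phi> where "local_defining_fun \<Omega> x1 r0 \<phi>" using charts by blast
    then obtain R where "boundary_chart \<Omega> x1 r0 R \<phi>"
      using boundary_chart_exists[OF \<Omega>(1) x1_frontier] by blast
    from boundary_chart.parabolic_max_not_at_boundary[OF this \<Omega>(2) cont twice neumann dn ineq
        \<epsilon>(1) \<open>t1 > 0\<close> max_t1]
    show False .
  qed
qed

section \<open>Time derivative of the Neumann resolvent\<close>

lemma Cauchy_at_zero_imp_tendsto:
  fixes g :: "real \<Rightarrow> real"
  assumes "\<And>e. e > 0 \<Longrightarrow> \<exists>\<delta>>0. \<forall>h k. h \<noteq> 0 \<longrightarrow> k \<noteq> 0 \<longrightarrow> \<bar>h\<bar> < \<delta> \<longrightarrow> \<bar>k\<bar> < \<delta> \<longrightarrow>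
      \<bar>g h - g k\<bar> \<le> e"
  obtains D where "(g \<longlongrightarrow> D) (at 0)"
proof -
  have "cauchy_filter (filtermap g (at 0))"
    unfolding cauchy_filter_metric_filtermap
  proof (intro allI impI)
    fix e :: real assume "e > 0"
    then obtain \<delta> where \<delta>: "\<delta> > 0" "\<And>h k. h \<noteq> 0 \<Longrightarrow> k \<noteq> 0 \<Longrightarrow> \<bar>h\<bar> < \<delta> \<Longrightarrow> \<bar>k\<bar> < \<delta> \<Longrightarrow>
        \<bar>g h - g k\<bar> \<le> e / 2"
      using assms[of "e / 2"] by auto
    have "eventually (\<lambda>h. h \<noteq> 0 \<and> \<bar>h\<bar> < \<delta>) (at 0)"
      using \<delta>(1) by (auto simp: eventually_at dist_real_def)
    moreover have "dist (g h) (g k) < e" if "h \<noteq> 0 \<and> \<bar>h\<bar> < \<delta>" "k \<noteq> 0 \<and> \<bar>k\<bar> < \<delta>" for h k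
      using \<delta>(2)[of h k] that \<open>e > 0\<close> by (simp add: dist_real_def)
    ultimately show "\<exists>P. eventually P (at 0) \<and> (\<forall>h k. P h \<and> P k \<longrightarrow> dist (g h) (g k) < e)"
      by blast
  qed
  moreover have "filtermap g (at 0) \<noteq> bot" by (simp add: filtermap_bot_iff)
  ultimately obtain D where "filtermap g (at 0) \<le> nhds D"
    using cauchy_filter_complete_converges[OF _ complete_UNIV] by auto
  then show ?thesis using that by (simp add: filterlim_def)
qed

lemma uniform_difference_quotient:
  fixes W W' :: "real \<Rightarrow> 'a::euclidean_space \<Rightarrow> real"
  assumes K: "compact K" and t: "t > 0"
    and W: "\<And>s y. s > 0 \<Longrightarrow> y \<in> K \<Longrightarrow> ((\<lambda>s. W s y) has_real_derivative W' s y) (at s)"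
    and W'_cont: "continuous_on ({0<..} \<times> K) (\<lambda>(s, y). W' s y)"
    and \<epsilon>: "\<epsilon> > 0"
  shows "\<exists>\<delta>>0. \<forall>h. h \<noteq> 0 \<longrightarrow> \<bar>h\<bar> < \<delta> \<longrightarrow> (\<forall>y\<in>K. \<bar>(W (t + h) y - W t y) / h - W' t y\<bar> \<le> \<epsilon>)"
proof -
  define KK where "KK = {t/2..3*t/2} \<times> K"
  have "uniformly_continuous_on KK (\<lambda>(s, y). W' s y)"
    using t by (intro compact_uniformly_continuous continuous_on_subset[OF W'_cont])
      (auto simp: KK_def K compact_Times)
  then obtain d where d: "d > 0" "\<And>p p'. p \<in> KK \<Longrightarrow> p' \<in> KK \<Longrightarrow> dist p' p < d \<Longrightarrow>
      dist ((\<lambda>(s, y). W' s y) p') ((\<lambda>(s, y). W' s y) p) < \<epsilon>"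
    unfolding uniformly_continuous_on_def using \<epsilon> by metis
  define \<delta> where "\<delta> = min d (t/2)"
  have "\<bar>(W (t + h) y - W t y) / h - W' t y\<bar> \<le> \<epsilon>" if h: "h \<noteq> 0" "\<bar>h\<bar> < \<delta>" and y: "y \<in> K" for h y
  proof -
    have W_between: "((\<lambda>s. W s y) has_real_derivative W' s y) (at s)" if "s \<in> {t - \<bar>h\<bar>..t + \<bar>h\<bar>}" for s
      using W[of s y] y that h(2) by (auto simp: \<delta>_def)
    obtain z where z: "\<bar>z - t\<bar> < \<bar>h\<bar>" "(W (t + h) y - W t y) / h = W' z y"
    proof (cases "h > 0")
      case True
      with MVT2[of t "t + h" "\<lambda>s. W s y" "\<lambda>s. W' s y"] W_between obtain z
        where "t < z" "z < t + h" "W (t + h) y - W t y = (t + h - t) * W' z y" by force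
      then show ?thesis using that[of z] True by auto
    next
      case False
      with MVT2[of "t + h" t "\<lambda>s. W s y" "\<lambda>s. W' s y"] W_between h(1) obtain z
        where "t + h < z" "z < t" "W t y - W (t + h) y = (t - (t + h)) * W' z y" by force
      then show ?thesis using that[of z] False h(1) by (auto simp: field_simps)
    qed
    have "(z, y) \<in> KK" "(t, y) \<in> KK" "dist (z, y) (t, y) < d"
      using z(1) h(2) y t by (auto simp: KK_def \<delta>_def dist_Pair_Pair dist_real_def)
    then show ?thesis using d(2) z(2) by (force simp: dist_real_def)
  qed
  moreover have "\<delta> > 0" using d t by (simp add: \<delta>_def)
  ultimately show ?thesis by blast
qed

definition neumann_regular :: "'a::euclidean_space set \<Rightarrow> ('a \<Rightarrow> real) \<Rightarrow> bool" where
  "neumann_regular \<Omega> w \<longleftrightarrow>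
     twice_diff_on \<Omega> w \<and> continuous_on (closure \<Omega>) w \<and> neumann_differentiable \<Omega> w"

lemma neumann_regular_lincomb:
  assumes "open \<Omega>" "neumann_regular \<Omega> f" "neumann_regular \<Omega> g"
  shows "neumann_regular \<Omega> (\<lambda>y. a * f y + b * g y)"
    and "x \<in> \<Omega> \<Longrightarrow> lap (\<lambda>y. a * f y + b * g y) x = a * lap f x + b * lap g x"
  using assms twice_diff_on_lincomb[of \<Omega> f g] neumann_differentiable_lincomb[of \<Omega> f g]
  unfolding neumann_regular_def by (auto intro!: continuous_intros)

lemma elliptic_abs_bound:
  fixes w :: "'a::euclidean_space \<Rightarrow> real"
  assumes \<Omega>: "open \<Omega>" "bounded \<Omega>" and charts: "\<forall>x\<in>frontier \<Omega>. \<exists>r \<phi>. local_defining_fun \<Omega> x r \<phi>"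
    and \<beta>: "\<beta> > 0" and w: "neumann_regular \<Omega> w"
    and bound: "\<And>x. x \<in> \<Omega> \<Longrightarrow> \<bar>- lap w x + \<beta> * w x\<bar> \<le> K"
    and z: "z \<in> closure \<Omega>"
  shows "\<bar>w z\<bar> \<le> K / \<beta>"
proof -
  have "w z \<le> K / \<beta>"
    using w bound abs_le_D1 unfolding neumann_regular_def
    by (intro elliptic_max_principle[OF \<Omega> charts \<beta> _ _ _ _ z]) auto
  moreover have "- w z \<le> K / \<beta>"
  proof -
    note neg = neumann_regular_lincomb[OF \<Omega>(1) w w, where a = "-1" and b = 0]
    have "- lap (\<lambda>y. - 1 * w y + 0 * w y) x + \<beta> * (- 1 * w x + 0 * w x) \<le> K" if "x \<in> \<Omega>" for x
      using neg(2)[OF that] bound[OF that] by simp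
    then have "- 1 * w z + 0 * w z \<le> K / \<beta>"
      using neg(1) unfolding neumann_regular_def
      by (intro elliptic_max_principle[OF \<Omega> charts \<beta> _ _ _ _ z]) auto
    then show ?thesis by simp
  qed
  ultimately show ?thesis by simp
qed

lemma resolvent_defect_comparison:
  fixes w1 w2 Z :: "'a::euclidean_space \<Rightarrow> real"
  assumes \<Omega>: "open \<Omega>" "bounded \<Omega>" and charts: "\<forall>x\<in>frontier \<Omega>. \<exists>r \<phi>. local_defining_fun \<Omega> x r \<phi>"
    and \<beta>: "\<beta> > 0"
    and w1: "neumann_regular \<Omega> w1" "\<forall>y\<in>\<Omega>. \<bar>- lap w1 y + \<beta> * w1 y - V y\<bar> \<le> \<epsilon>"
    and w2: "neumann_regular \<Omega> w2" "\<forall>y\<in>\<Omega>. \<bar>- lap w2 y + \<beta> * w2 y - V y\<bar> \<le> \<epsilon>"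
    and Z: "neumann_regular \<Omega> Z" "\<forall>y\<in>\<Omega>. - lap Z y + \<beta> * Z y + V y \<le> K"
    and x: "x \<in> closure \<Omega>"
  shows "\<bar>w1 x - w2 x\<bar> \<le> 2 * \<epsilon> / \<beta>" and "w1 x + Z x \<le> (\<epsilon> + K) / \<beta>"
proof -
  note diff = neumann_regular_lincomb[OF \<Omega>(1) w1(1) w2(1), where a = 1 and b = "-1"]
  have "\<bar>1 * w1 x + - 1 * w2 x\<bar> \<le> 2 * \<epsilon> / \<beta>"
  proof (rule elliptic_abs_bound[OF \<Omega> charts \<beta> diff(1) _ x])
    fix y assume y: "y \<in> \<Omega>"
    have "- lap (\<lambda>y. 1 * w1 y + - 1 * w2 y) y + \<beta> * (1 * w1 y + - 1 * w2 y)
        = (- lap w1 y + \<beta> * w1 y - V y) - (- lap w2 y + \<beta> * w2 y - V y)"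
      unfolding diff(2)[OF y] by (simp add: algebra_simps)
    then show "\<bar>- lap (\<lambda>y. 1 * w1 y + - 1 * w2 y) y + \<beta> * (1 * w1 y + - 1 * w2 y)\<bar> \<le> 2 * \<epsilon>"
      using w1(2) w2(2) y abs_triangle_ineq4[of "- lap w1 y + \<beta> * w1 y - V y" "- lap w2 y + \<beta> * w2 y - V y"]
      by fastforce
  qed
  then show "\<bar>w1 x - w2 x\<bar> \<le> 2 * \<epsilon> / \<beta>" by simp
  note sum = neumann_regular_lincomb[OF \<Omega>(1) w1(1) Z(1), where a = 1 and b = 1]
  have "1 * w1 x + 1 * Z x \<le> (\<epsilon> + K) / \<beta>"
  proof (rule elliptic_max_principle[OF \<Omega> charts \<beta> _ _ _ _ x])
    show "twice_diff_on \<Omega> (\<lambda>y. 1 * w1 y + 1 * Z y)" "continuous_on (closure \<Omega>) (\<lambda>y. 1 * w1 y + 1 * Z y)"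
      "neumann_differentiable \<Omega> (\<lambda>y. 1 * w1 y + 1 * Z y)"
      using sum(1) unfolding neumann_regular_def by auto
    fix y assume y: "y \<in> \<Omega>"
    have "- lap (\<lambda>y. 1 * w1 y + 1 * Z y) y + \<beta> * (1 * w1 y + 1 * Z y)
        = (- lap w1 y + \<beta> * w1 y - V y) + (- lap Z y + \<beta> * Z y + V y)"
      unfolding sum(2)[OF y] by (simp add: algebra_simps)
    then show "- lap (\<lambda>y. 1 * w1 y + 1 * Z y) y + \<beta> * (1 * w1 y + 1 * Z y) \<le> \<epsilon> + K"
      using w1(2) Z(2) y by (fastforce simp: abs_le_iff)
  qed
  then show "w1 x + Z x \<le> (\<epsilon> + K) / \<beta>" by simp
qed

lemma resolvent_difference_quotient:
  fixes S :: "real \<Rightarrow> 'a::euclidean_space \<Rightarrow> real"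
  assumes \<Omega>: "open \<Omega>"
    and S: "\<forall>s\<ge>0. neumann_regular \<Omega> (S s)"
    and S_eq: "\<forall>s\<ge>0. \<forall>y\<in>\<Omega>. - lap (S s) y + \<beta> * S s y = U s y"
    and t: "t \<ge> 0" "t + h \<ge> 0"
  shows "neumann_regular \<Omega> (\<lambda>y. (S (t + h) y - S t y) / h)"
    and "y \<in> \<Omega> \<Longrightarrow> - lap (\<lambda>y. (S (t + h) y - S t y) / h) y + \<beta> * ((S (t + h) y - S t y) / h)
      = (U (t + h) y - U t y) / h"
proof -
  have reg: "neumann_regular \<Omega> (S (t + h))" "neumann_regular \<Omega> (S t)" using S t by auto
  have Dq: "(\<lambda>y. (S (t + h) y - S t y) / h) = (\<lambda>y. 1 / h * S (t + h) y + (- 1 / h) * S t y)"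
    by (simp add: fun_eq_iff diff_divide_distrib)
  show "neumann_regular \<Omega> (\<lambda>y. (S (t + h) y - S t y) / h)"
    unfolding Dq by (rule neumann_regular_lincomb(1)[OF \<Omega> reg])
  assume y: "y \<in> \<Omega>"
  have "- lap (\<lambda>y. (S (t + h) y - S t y) / h) y + \<beta> * ((S (t + h) y - S t y) / h)
      = 1 / h * (- lap (S (t + h)) y + \<beta> * S (t + h) y) + (- 1 / h) * (- lap (S t) y + \<beta> * S t y)"
    unfolding Dq neumann_regular_lincomb(2)[OF \<Omega> reg y] by (simp add: algebra_simps diff_divide_distrib)
  also have "\<dots> = (U (t + h) y - U t y) / h"
    using S_eq t y by (simp add: diff_divide_distrib)
  finally show "- lap (\<lambda>y. (S (t + h) y - S t y) / h) y + \<beta> * ((S (t + h) y - S t y) / h)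
      = (U (t + h) y - U t y) / h" .
qed

lemma difference_quotient_bounds:
  fixes S :: "real \<Rightarrow> 'a::euclidean_space \<Rightarrow> real"
  assumes \<Omega>: "open \<Omega>" "bounded \<Omega>" and charts: "\<forall>x\<in>frontier \<Omega>. \<exists>r \<phi>. local_defining_fun \<Omega> x r \<phi>"
    and \<beta>: "\<beta> > 0" and t: "t > 0"
    and S: "\<forall>s\<ge>0. neumann_regular \<Omega> (S s)"
    and S_eq: "\<forall>s\<ge>0. \<forall>y\<in>\<Omega>. - lap (S s) y + \<beta> * S s y = U s y"
    and U': "\<forall>\<epsilon>>0.
      \<exists>\<delta>>0. \<forall>h. h \<noteq> 0 \<longrightarrow> \<bar>h\<bar> < \<delta> \<longrightarrow> (\<forall>y\<in>\<Omega>. \<bar>(U (t + h) y - U t y) / h - V y\<bar> \<le> \<epsilon>)"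
    and Z: "neumann_regular \<Omega> Z" and Z_le: "\<forall>y\<in>\<Omega>. - lap Z y + \<beta> * Z y + V y \<le> K"
    and x: "x \<in> closure \<Omega>" and \<epsilon>: "\<epsilon> > 0"
  obtains \<delta> where "\<delta> > 0"
    "\<And>h k. h \<noteq> 0 \<Longrightarrow> k \<noteq> 0 \<Longrightarrow> \<bar>h\<bar> < \<delta> \<Longrightarrow> \<bar>k\<bar> < \<delta> \<Longrightarrow>
       \<bar>(S (t + h) x - S t x) / h - (S (t + k) x - S t x) / k\<bar> \<le> 2 * \<epsilon> / \<beta>"
    "\<And>h. h \<noteq> 0 \<Longrightarrow> \<bar>h\<bar> < \<delta> \<Longrightarrow> (S (t + h) x - S t x) / h + Z x \<le> (\<epsilon> + K) / \<beta>"
proof -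
  obtain \<delta>1 where \<delta>1: "\<delta>1 > 0"
    "\<And>h y. h \<noteq> 0 \<Longrightarrow> \<bar>h\<bar> < \<delta>1 \<Longrightarrow> y \<in> \<Omega> \<Longrightarrow> \<bar>(U (t + h) y - U t y) / h - V y\<bar> \<le> \<epsilon>"
    using U' \<epsilon> by blast
  define \<delta> where "\<delta> = min \<delta>1 t"
  have Dq: "neumann_regular \<Omega> (\<lambda>y. (S (t + h) y - S t y) / h)"
    "\<forall>y\<in>\<Omega>. \<bar>- lap (\<lambda>y. (S (t + h) y - S t y) / h) y + \<beta> * ((S (t + h) y - S t y) / h) - V y\<bar> \<le> \<epsilon>"
    if h: "h \<noteq> 0" "\<bar>h\<bar> < \<delta>" for h
  proof -
    have th: "t \<ge> 0" "t + h \<ge> 0" using t h by (auto simp: \<delta>_def)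
    show "neumann_regular \<Omega> (\<lambda>y. (S (t + h) y - S t y) / h)"
      by (rule resolvent_difference_quotient(1)[OF \<Omega>(1) S S_eq th])
    show "\<forall>y\<in>\<Omega>. \<bar>- lap (\<lambda>y. (S (t + h) y - S t y) / h) y + \<beta> * ((S (t + h) y - S t y) / h) - V y\<bar> \<le> \<epsilon>"
      using resolvent_difference_quotient(2)[OF \<Omega>(1) S S_eq th] \<delta>1(2) h by (simp add: \<delta>_def)
  qed
  show ?thesis
  proof
    show "\<delta> > 0" using \<delta>1(1) t by (simp add: \<delta>_def)
    show "\<bar>(S (t + h) x - S t x) / h - (S (t + k) x - S t x) / k\<bar> \<le> 2 * \<epsilon> / \<beta>"
      if "h \<noteq> 0" "k \<noteq> 0" "\<bar>h\<bar> < \<delta>" "\<bar>k\<bar> < \<delta>" for h k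
      using resolvent_defect_comparison(1)[OF \<Omega> charts \<beta> Dq[of h] Dq[of k] Z Z_le x] that by simp
    show "(S (t + h) x - S t x) / h + Z x \<le> (\<epsilon> + K) / \<beta>" if "h \<noteq> 0" "\<bar>h\<bar> < \<delta>" for h
      using resolvent_defect_comparison(2)[OF \<Omega> charts \<beta> Dq[of h] Dq[of h] Z Z_le x] that by simp
  qed
qed

lemma resolvent_time_derivative:
  fixes S :: "real \<Rightarrow> 'a::euclidean_space \<Rightarrow> real"
  assumes \<Omega>: "open \<Omega>" "bounded \<Omega>" and charts: "\<forall>x\<in>frontier \<Omega>. \<exists>r \<phi>. local_defining_fun \<Omega> x r \<phi>"
    and \<beta>: "\<beta> > 0" and t: "t > 0"
    and S: "\<forall>s\<ge>0. neumann_regular \<Omega> (S s)"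
    and S_eq: "\<forall>s\<ge>0. \<forall>y\<in>\<Omega>. - lap (S s) y + \<beta> * S s y = U s y"
    and U': "\<forall>\<epsilon>>0.
      \<exists>\<delta>>0. \<forall>h. h \<noteq> 0 \<longrightarrow> \<bar>h\<bar> < \<delta> \<longrightarrow> (\<forall>y\<in>\<Omega>. \<bar>(U (t + h) y - U t y) / h - V y\<bar> \<le> \<epsilon>)"
    and Z: "neumann_regular \<Omega> Z" and Z_le: "\<forall>y\<in>\<Omega>. - lap Z y + \<beta> * Z y + V y \<le> K"
    and x: "x \<in> closure \<Omega>"
  obtains D where "((\<lambda>s. S s x) has_real_derivative D) (at t)" "D + Z x \<le> K / \<beta>"
proof -
  note bounds = difference_quotient_bounds[OF \<Omega> charts \<beta> t S S_eq U' Z Z_le x]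
  define g where "g h = (S (t + h) x - S t x) / h" for h
  obtain D where D: "(g \<longlongrightarrow> D) (at 0)"
  proof (rule Cauchy_at_zero_imp_tendsto)
    fix e :: real assume "e > 0"
    then have "e * \<beta> / 2 > 0" using \<beta> by simp
    from bounds[OF this] obtain \<delta> where "\<delta> > 0" "\<And>h k. h \<noteq> 0 \<Longrightarrow> k \<noteq> 0 \<Longrightarrow> \<bar>h\<bar> < \<delta> \<Longrightarrow> \<bar>k\<bar> < \<delta> \<Longrightarrow>
        \<bar>g h - g k\<bar> \<le> 2 * (e * \<beta> / 2) / \<beta>"
      unfolding g_def by metis
    then show "\<exists>\<delta>>0. \<forall>h k. h \<noteq> 0 \<longrightarrow> k \<noteq> 0 \<longrightarrow> \<bar>h\<bar> < \<delta> \<longrightarrow> \<bar>k\<bar> < \<delta> \<longrightarrow> \<bar>g h - g k\<bar> \<le> e"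
      using \<beta> by auto
  qed
  have "D + Z x \<le> K / \<beta> + e" if "e > 0" for e
  proof -
    have "e * \<beta> > 0" using that \<beta> by simp
    from bounds[OF this] obtain \<delta> where \<delta>: "\<delta> > 0"
      "\<And>h. h \<noteq> 0 \<Longrightarrow> \<bar>h\<bar> < \<delta> \<Longrightarrow> g h + Z x \<le> (e * \<beta> + K) / \<beta>"
      unfolding g_def by metis
    have "eventually (\<lambda>h. g h + Z x \<le> (e * \<beta> + K) / \<beta>) (at 0)"
      using \<delta> by (auto simp: eventually_at dist_real_def)
    from tendsto_upperbound[OF tendsto_add[OF D tendsto_const] this] have "D + Z x \<le> (e * \<beta> + K) / \<beta>"
      by simp
    then show ?thesis using \<beta> by (simp add: add_divide_distrib)
  qed
  then have "D + Z x \<le> K / \<beta>" by (rule field_le_epsilon)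
  moreover have "((\<lambda>s. S s x) has_real_derivative D) (at t)"
    using D unfolding DERIV_def g_def .
  ultimately show ?thesis using that by blast
qed

lemma A1_has_derivative:
  "assumption_A1 \<gamma> \<Longrightarrow> s > 0 \<Longrightarrow> (\<gamma> has_real_derivative deriv \<gamma> s) (at s)"
  unfolding assumption_A1_def using Ck_on_differentiable[of 3 "{0<..}" \<gamma> s]
  by (simp add: DERIV_deriv_iff_real_differentiable)

lemma A1_continuous_on: "assumption_A1 \<gamma> \<Longrightarrow> continuous_on {0<..} \<gamma>"
  using A1_has_derivative by (meson DERIV_isCont continuous_at_imp_continuous_on greaterThan_iff)

lemma A1_pos: "assumption_A1 \<gamma> \<Longrightarrow> s > 0 \<Longrightarrow> \<gamma> s > 0"
  unfolding assumption_A1_def by blast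

lemma A1_deriv_nonpos: "assumption_A1 \<gamma> \<Longrightarrow> s > 0 \<Longrightarrow> deriv \<gamma> s \<le> 0"
  unfolding assumption_A1_def by blast

lemma A1_antimono:
  assumes "assumption_A1 \<gamma>" "0 < a" "a \<le> b"
  shows "\<gamma> b \<le> \<gamma> a"
proof (rule DERIV_nonpos_imp_nonincreasing[OF assms(3)])
  fix x assume "a \<le> x" "x \<le> b"
  then have "x > 0" using assms(2) by simp
  then show "\<exists>y. DERIV \<gamma> x :> y \<and> y \<le> 0"
    using A1_has_derivative[OF assms(1)] A1_deriv_nonpos[OF assms(1)] by blast
qed

lemma gamma_star_eq:
  assumes "assumption_A1 \<gamma>" "vstar > 0"
  shows "gamma_star \<gamma> vstar = \<gamma> vstar"
  unfolding gamma_star_def by (rule cSup_eq_maximum) (use A1_antimono[OF assms(1)] assms(2) in auto)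

lemma Gamma_has_derivative:
  assumes A1: "assumption_A1 \<gamma>" and s: "s > 0"
  shows "(Gamma_fun \<gamma> has_real_derivative \<gamma> s) (at s)"
proof -
  define a where "a = min 1 s / 2"
  define b where "b = max 1 s + 1"
  have ab: "0 < a" "a < s" "s < b" "a \<le> 1" "1 \<le> b" using s by (auto simp: a_def b_def)
  have "continuous_on {a..b} \<gamma>"
    by (rule continuous_on_subset[OF A1_continuous_on[OF A1]]) (use ab in auto)
  then have "((\<lambda>x. LBINT \<eta>=ereal 1..ereal x. \<gamma> \<eta>) has_vector_derivative \<gamma> s) (at s within {a..b})"
    by (rule interval_integral_FTC2[OF ab(4,5)]) (use ab in auto)
  moreover have "at s within {a..b} = at s"
    by (rule at_within_interior) (use ab in auto)
  ultimately show ?thesis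
    unfolding Gamma_fun_def[abs_def] one_ereal_def by (simp add: has_real_derivative_iff_has_vector_derivative)
qed

lemma Gamma_continuous_on: "assumption_A1 \<gamma> \<Longrightarrow> continuous_on {0<..} (Gamma_fun \<gamma>)"
  using Gamma_has_derivative by (meson DERIV_isCont continuous_at_imp_continuous_on greaterThan_iff)

lemma Gamma_mono:
  assumes A1: "assumption_A1 \<gamma>" and "0 < a" "a \<le> b"
  shows "Gamma_fun \<gamma> a \<le> Gamma_fun \<gamma> b"
  using assms Gamma_has_derivative[OF A1] A1_pos[OF A1]
  by (intro DERIV_nonneg_imp_nondecreasing[OF assms(3)]) (meson less_le_trans less_imp_le)

text \<open>\<open>(\<Gamma>(s) - s \<gamma>(s))' = - s \<gamma>'(s) \<ge> 0\<close>.\<close>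
lemma Gamma_minus_mono:
  assumes A1: "assumption_A1 \<gamma>" and "0 < a" "a \<le> b"
  shows "Gamma_fun \<gamma> a - a * \<gamma> a \<le> Gamma_fun \<gamma> b - b * \<gamma> b"
proof (rule DERIV_nonneg_imp_nondecreasing[OF assms(3)])
  fix x assume "a \<le> x" "x \<le> b"
  then have x: "x > 0" using assms by simp
  have "((\<lambda>x. Gamma_fun \<gamma> x - x * \<gamma> x) has_real_derivative (\<gamma> x - (1 * \<gamma> x + x * deriv \<gamma> x))) (at x)"
    using DERIV_diff[OF Gamma_has_derivative[OF A1 x] DERIV_mult[OF DERIV_ident A1_has_derivative[OF A1 x]]]
    by (simp add: mult.commute)
  moreover have "\<gamma> x - (1 * \<gamma> x + x * deriv \<gamma> x) \<ge> 0"
    using A1_deriv_nonpos[OF A1 x] x by (simp add: mult_nonneg_nonpos)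
  ultimately show "\<exists>y. DERIV (\<lambda>x. Gamma_fun \<gamma> x - x * \<gamma> x) x :> y \<and> y \<ge> 0" by blast
qed

lemma lap_Gamma_comp:
  fixes w :: "'a::euclidean_space \<Rightarrow> real"
  assumes A1: "assumption_A1 \<gamma>" and U: "open U" and w: "twice_diff_on U w"
    and pos: "\<And>y. y \<in> U \<Longrightarrow> w y > 0"
  shows "twice_diff_on U (\<lambda>y. Gamma_fun \<gamma> (w y))"
    and "y \<in> U \<Longrightarrow> lap (\<lambda>y. Gamma_fun \<gamma> (w y)) y \<le> \<gamma> (w y) * lap w y"
proof -
  note comp = twice_diff_on_comp[OF U w, of "Gamma_fun \<gamma>" \<gamma> "deriv \<gamma>"]
  have derivs: "\<And>y. y \<in> U \<Longrightarrow> (Gamma_fun \<gamma> has_real_derivative \<gamma> (w y)) (at (w y))"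
    "\<And>y. y \<in> U \<Longrightarrow> (\<gamma> has_real_derivative deriv \<gamma> (w y)) (at (w y))"
    using Gamma_has_derivative[OF A1] A1_has_derivative[OF A1] pos by auto
  show "twice_diff_on U (\<lambda>y. Gamma_fun \<gamma> (w y))" using comp(1)[OF derivs] .
  assume y: "y \<in> U"
  have "deriv \<gamma> (w y) * (\<Sum>i\<in>Basis. (pd i w y)\<^sup>2) \<le> 0"
    using A1_deriv_nonpos[OF A1 pos[OF y]] by (intro mult_nonpos_nonneg sum_nonneg) auto
  then show "lap (\<lambda>y. Gamma_fun \<gamma> (w y)) y \<le> \<gamma> (w y) * lap w y"
    using comp(2)[OF derivs y] by simp
qed

lemma classical_reg_has_derivative:
  "classical_reg \<Omega> w \<Longrightarrow> t > 0 \<Longrightarrow> x \<in> closure \<Omega> \<Longrightarrow>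
     ((\<lambda>s. w s x) has_real_derivative dt w t x) (at t)"
  unfolding classical_reg_def dt_def by (simp add: DERIV_deriv_iff_real_differentiable)

lemma neumann_regular_if_C2_C1bar:
  "C2_C1bar \<Omega> w \<Longrightarrow> neumann_bc \<Omega> w \<Longrightarrow> neumann_regular \<Omega> w"
  unfolding neumann_regular_def
  using C2_C1bar_twice_diff_on C2_C1bar_continuous_on neumann_differentiable_if_neumann_bc by blast

locale chemotaxis_solution =
  fixes \<Omega> :: "'a::euclidean_space set" and \<tau> \<beta> A B vstar :: real and \<gamma> f :: "real \<Rightarrow> real"
    and u v n S :: "real \<Rightarrow> 'a \<Rightarrow> real"
  assumes domain: "smooth_bounded_domain \<Omega>" and beta: "\<beta> > 0"
    and A1: "assumption_A1 \<gamma>" and F: "assumption_F f"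
    and sol: "classical_solution_P \<Omega> \<tau> \<beta> \<gamma> f u v n"
    and u_nonneg: "\<forall>t\<ge>0. \<forall>x\<in>closure \<Omega>. u t x \<ge> 0"
    and n_nonneg: "\<forall>t\<ge>0. \<forall>x\<in>closure \<Omega>. n t x \<ge> 0"
    and vstar: "vstar > 0" "\<forall>t\<ge>0. \<forall>x\<in>closure \<Omega>. v t x \<ge> vstar"
    and S_def: "\<forall>t\<ge>0. neumann_resolvent \<Omega> \<beta> (\<lambda>x. u t x + n t x) (S t)"
    and AB: "0 < A" "A \<le> B"
    and comparison: "\<forall>t\<ge>0. \<forall>x\<in>closure \<Omega>. A * S t x \<le> v t x \<and> v t x \<le> B * S t x"
begin

lemma open_domain: "open \<Omega>" and bounded_domain: "bounded \<Omega>"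
  and charts: "\<forall>x\<in>frontier \<Omega>. \<exists>r \<phi>. local_defining_fun \<Omega> x r \<phi>"
  using domain unfolding smooth_bounded_domain_def by auto

lemma reg_u: "classical_reg \<Omega> u" and reg_n: "classical_reg \<Omega> n"
  using sol unfolding classical_solution_P_def by auto

lemma pde:
  assumes "t > 0" "x \<in> \<Omega>"
  shows "dt u t x = lap (\<lambda>y. u t y * \<gamma> (v t y)) x + u t x * f (n t x)"
    and "dt n t x = lap (n t) x - u t x * f (n t x)"
  using sol assms unfolding classical_solution_P_def by auto

lemma neumann_regular_n: "t > 0 \<Longrightarrow> neumann_regular \<Omega> (n t)"
  using reg_n sol neumann_regular_if_C2_C1bar[of \<Omega> "n t"]
  unfolding classical_solution_P_def classical_reg_def by simp

lemma neumann_regular_flux: "t > 0 \<Longrightarrow> neumann_regular \<Omega> (\<lambda>x. u t x * \<gamma> (v t x))"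
  using sol neumann_regular_if_C2_C1bar[of \<Omega> "\<lambda>x. u t x * \<gamma> (v t x)"]
  unfolding classical_solution_P_def by simp

lemma neumann_regular_S: "s \<ge> 0 \<Longrightarrow> neumann_regular \<Omega> (S s)"
  using S_def neumann_regular_if_C2_C1bar[of \<Omega> "S s"] unfolding neumann_resolvent_def by simp

lemma S_eq: "s \<ge> 0 \<Longrightarrow> y \<in> \<Omega> \<Longrightarrow> - lap (S s) y + \<beta> * S s y = u s y + n s y"
  using S_def unfolding neumann_resolvent_def by blast

lemma AS_lower_bound:
  assumes "t \<ge> 0" "y \<in> closure \<Omega>"
  shows "A * S t y \<ge> A * vstar / B"
proof -
  have "vstar \<le> B * S t y" using vstar(2) comparison assms by force
  then have "vstar / B \<le> S t y" using AB by (simp add: divide_le_eq mult.commute)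
  then show ?thesis using AB mult_left_mono[of "vstar / B" "S t y" A] by simp
qed

lemma AS_pos:
  assumes "t \<ge> 0" "y \<in> closure \<Omega>"
  shows "A * S t y > 0"
proof -
  have "A * vstar / B > 0" using AB vstar(1) by simp
  then show ?thesis using AS_lower_bound[OF assms] by linarith
qed

text \<open>\<open>n\<close> is a subsolution of the heat equation, since \<open>u f(n) \<ge> 0\<close>.\<close>
lemma n_bounded:
  obtains M0 where "\<And>t x. t \<ge> 0 \<Longrightarrow> x \<in> closure \<Omega> \<Longrightarrow> n t x \<le> M0"
proof -
  have cont: "continuous_on ({0..} \<times> closure \<Omega>) (\<lambda>(t, x). n t x)"
    using reg_n unfolding classical_reg_def by blast
  have "continuous_on (closure \<Omega>) (\<lambda>x. (\<lambda>(t, x). n t x) (0::real, x))"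
    by (rule continuous_on_compose2[OF cont]) (auto intro!: continuous_intros)
  then have "compact ((\<lambda>x. n 0 x) ` closure \<Omega>)"
    using bounded_domain by (simp add: compact_continuous_image)
  then obtain M0 where M0: "\<And>x. x \<in> closure \<Omega> \<Longrightarrow> n 0 x \<le> M0"
    by (meson bdd_above.E bounded_imp_bdd_above compact_imp_bounded image_eqI)
  have ineq: "dt n t x \<le> lap (n t) x" if "t > 0" "x \<in> \<Omega>" for t x
  proof -
    have "x \<in> closure \<Omega>" using that closure_subset by blast
    then have "u t x \<ge> 0" "f (n t x) \<ge> 0"
      using u_nonneg n_nonneg F that(1) unfolding assumption_F_def by auto
    then show ?thesis using pde(2)[OF that] by simp
  qed
  have "n t x \<le> M0" if "t \<ge> 0" "x \<in> closure \<Omega>" for t x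
  proof (rule parabolic_max_principle[OF open_domain bounded_domain charts cont _ _ _ ineq M0 that])
    show "twice_diff_on \<Omega> (n t)" "neumann_differentiable \<Omega> (n t)" if "t > 0" for t
      using neumann_regular_n[OF that] unfolding neumann_regular_def by auto
    show "((\<lambda>s. n s x) has_real_derivative dt n t x) (at t)" if "t > 0" "x \<in> \<Omega>" for t x
      using classical_reg_has_derivative[OF reg_n that(1)] that(2) closure_subset by blast
  qed
  then show ?thesis by (rule that)
qed

end

context chemotaxis_solution
begin

lemma Gamma_AS:
  assumes t: "t \<ge> 0"
  shows "neumann_regular \<Omega> (\<lambda>y. Gamma_fun \<gamma> (A * S t y))"
    and "y \<in> \<Omega> \<Longrightarrow> lap (\<lambda>y. Gamma_fun \<gamma> (A * S t y)) y \<le> \<gamma> (A * S t y) * (A * lap (S t) y)"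
proof -
  have AS: "neumann_regular \<Omega> (\<lambda>y. A * S t y)" "\<And>y. y \<in> \<Omega> \<Longrightarrow> lap (\<lambda>y. A * S t y) y = A * lap (S t) y"
    using neumann_regular_lincomb[OF open_domain neumann_regular_S[OF t] neumann_regular_S[OF t],
        where a = A and b = 0] by simp_all
  then have AS_parts: "twice_diff_on \<Omega> (\<lambda>y. A * S t y)" "continuous_on (closure \<Omega>) (\<lambda>y. A * S t y)"
    "neumann_differentiable \<Omega> (\<lambda>y. A * S t y)"
    unfolding neumann_regular_def by blast+
  have pos: "\<And>y. y \<in> \<Omega> \<Longrightarrow> A * S t y > 0" using AS_pos[OF t] closure_subset by blast
  have "continuous_on (closure \<Omega>) (\<lambda>y. Gamma_fun \<gamma> (A * S t y))"
    by (rule continuous_on_compose2[OF Gamma_continuous_on[OF A1] AS_parts(2)]) (auto intro: AS_pos[OF t])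
  moreover have "neumann_differentiable \<Omega> (\<lambda>y. Gamma_fun \<gamma> (A * S t y))"
  proof (rule neumann_differentiable_comp[OF AS_parts(3)])
    fix x assume "x \<in> frontier \<Omega>"
    then have "A * S t x > 0" using AS_pos[OF t] by (simp add: frontier_def)
    then show "(Gamma_fun \<gamma> has_real_derivative \<gamma> (A * S t x)) (at (A * S t x))"
      by (rule Gamma_has_derivative[OF A1])
  qed
  moreover have "twice_diff_on \<Omega> (\<lambda>y. Gamma_fun \<gamma> (A * S t y))"
    by (rule lap_Gamma_comp(1)[OF A1 open_domain AS_parts(1)]) (rule pos)
  ultimately show "neumann_regular \<Omega> (\<lambda>y. Gamma_fun \<gamma> (A * S t y))"
    unfolding neumann_regular_def by blast
  assume y: "y \<in> \<Omega>"
  show "lap (\<lambda>y. Gamma_fun \<gamma> (A * S t y)) y \<le> \<gamma> (A * S t y) * (A * lap (S t) y)"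
    using lap_Gamma_comp(2)[OF A1 open_domain AS_parts(1), of y] pos y AS(2)[OF y] by simp
qed

definition W :: "real \<Rightarrow> 'a \<Rightarrow> real" where
  "W t y = u t y * \<gamma> (v t y) + n t y - \<beta> / A * Gamma_fun \<gamma> (A * S t y)"

definition H_star :: real where
  "H_star = Gamma_fun \<gamma> (A * vstar / B) - A * vstar / B * \<gamma> (A * vstar / B)"

lemma W_lincomb:
  "W t = (\<lambda>y. 1 * (1 * (u t y * \<gamma> (v t y)) + 1 * n t y) + (- \<beta> / A) * Gamma_fun \<gamma> (A * S t y))"
  by (auto simp: W_def fun_eq_iff)

lemma neumann_regular_W: "t > 0 \<Longrightarrow> neumann_regular \<Omega> (W t)"
  unfolding W_lincomb
  by (intro neumann_regular_lincomb(1)[OF open_domain] neumann_regular_flux neumann_regular_n Gamma_AS) auto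

lemma lap_W:
  assumes "t > 0" "y \<in> \<Omega>"
  shows "lap (W t) y = lap (\<lambda>y. u t y * \<gamma> (v t y)) y + lap (n t) y
    - \<beta> / A * lap (\<lambda>y. Gamma_fun \<gamma> (A * S t y)) y"
proof -
  note sum = neumann_regular_lincomb[OF open_domain neumann_regular_flux[OF assms(1)] neumann_regular_n[OF assms(1)]]
  have "neumann_regular \<Omega> (\<lambda>y. Gamma_fun \<gamma> (A * S t y))" using Gamma_AS assms(1) by simp
  then have "lap (W t) y = 1 * lap (\<lambda>y. 1 * (u t y * \<gamma> (v t y)) + 1 * n t y) y
      + (- \<beta> / A) * lap (\<lambda>y. Gamma_fun \<gamma> (A * S t y)) y"
    unfolding W_lincomb by (rule neumann_regular_lincomb(2)[OF open_domain sum(1) _ assms(2)])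
  then show ?thesis using sum(2)[OF assms(2), of 1 1] by simp
qed

lemma W_defect:
  assumes M0: "\<And>t x. t \<ge> 0 \<Longrightarrow> x \<in> closure \<Omega> \<Longrightarrow> n t x \<le> M0" and t: "t > 0" and y: "y \<in> \<Omega>"
  shows "- lap (W t) y + \<beta> * W t y + (dt u t y + dt n t y) \<le> \<beta> * M0 - \<beta> * \<beta> / A * H_star"
proof -
  have yc: "y \<in> closure \<Omega>" using y closure_subset by blast
  define g where "g = \<gamma> (A * S t y)"
  define G where "G = Gamma_fun \<gamma> (A * S t y)"
  have lapG: "lap (\<lambda>y. Gamma_fun \<gamma> (A * S t y)) y \<le> g * (A * (\<beta> * S t y - (u t y + n t y)))"
    using Gamma_AS(2)[of t y] S_eq[of t y] t y by (simp add: g_def algebra_simps)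
  have "- lap (W t) y + \<beta> * W t y + (dt u t y + dt n t y)
      = \<beta> / A * lap (\<lambda>y. Gamma_fun \<gamma> (A * S t y)) y + \<beta> * W t y"
    using lap_W[OF t y] pde[OF t y] by simp
  also have "\<dots> \<le> \<beta> / A * (g * (A * (\<beta> * S t y - (u t y + n t y)))) + \<beta> * W t y"
    by (intro add_right_mono mult_left_mono lapG) (use beta AB in auto)
  also have "\<dots> = \<beta> * (u t y * (\<gamma> (v t y) - g)) + \<beta> * (n t y * (1 - g))
      - \<beta> * \<beta> / A * (G - A * S t y * g)"
    using AB by (simp add: W_def G_def field_simps)
  also have "\<dots> \<le> 0 + \<beta> * M0 - \<beta> * \<beta> / A * H_star"
  proof (intro diff_mono add_mono)
    have "\<gamma> (v t y) \<le> g"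
      unfolding g_def using A1_antimono[OF A1 AS_pos] comparison t yc by force
    then show "\<beta> * (u t y * (\<gamma> (v t y) - g)) \<le> 0"
      using u_nonneg t yc beta by (simp add: mult_nonneg_nonpos)
    have "g > 0" unfolding g_def using A1_pos[OF A1 AS_pos] t yc by simp
    moreover have "n t y \<ge> 0" using n_nonneg t yc by simp
    ultimately have "n t y * g \<ge> 0" by simp
    then have "n t y * (1 - g) \<le> M0" using M0[of t y] t yc by (simp add: algebra_simps)
    then show "\<beta> * (n t y * (1 - g)) \<le> \<beta> * M0"
      using beta by (intro mult_left_mono) auto
    have "H_star \<le> G - A * S t y * g"
      unfolding H_star_def G_def g_def using AS_lower_bound[of t y] AB vstar(1) t yc
      by (intro Gamma_minus_mono[OF A1]) auto
    then show "\<beta> * \<beta> / A * H_star \<le> \<beta> * \<beta> / A * (G - A * S t y * g)"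
      using beta AB by (intro mult_left_mono) auto
  qed
  finally show ?thesis by simp
qed

end

context chemotaxis_solution
begin

lemma S_time_derivative:
  assumes M0: "\<And>t x. t \<ge> 0 \<Longrightarrow> x \<in> closure \<Omega> \<Longrightarrow> n t x \<le> M0" and t: "t > 0" and x: "x \<in> \<Omega>"
  obtains D where "((\<lambda>s. S s x) has_real_derivative D) (at t)" "D + W t x \<le> M0 - \<beta> / A * H_star"
proof -
  have U': "\<exists>\<delta>>0. \<forall>h. h \<noteq> 0 \<longrightarrow> \<bar>h\<bar> < \<delta> \<longrightarrow>
      (\<forall>y\<in>\<Omega>. \<bar>(u (t + h) y + n (t + h) y - (u t y + n t y)) / h - (dt u t y + dt n t y)\<bar> \<le> \<epsilon>)"
    if \<epsilon>: "\<epsilon> > 0" for \<epsilon>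
  proof -
    have "continuous_on ({0<..} \<times> closure \<Omega>) (\<lambda>p. dt u (fst p) (snd p))"
      "continuous_on ({0<..} \<times> closure \<Omega>) (\<lambda>p. dt n (fst p) (snd p))"
      using reg_u reg_n unfolding classical_reg_def case_prod_beta' by blast+
    then have "continuous_on ({0<..} \<times> closure \<Omega>) (\<lambda>(s, y). dt u s y + dt n s y)"
      unfolding case_prod_beta' by (rule continuous_on_add)
    moreover have "((\<lambda>s. u s y + n s y) has_real_derivative dt u s y + dt n s y) (at s)"
      if "s > 0" "y \<in> closure \<Omega>" for s y
      using classical_reg_has_derivative[OF reg_u that] classical_reg_has_derivative[OF reg_n that]
      by (rule DERIV_add)
    ultimately obtain \<delta> where "\<delta> > 0" "\<forall>h. h \<noteq> 0 \<longrightarrow> \<bar>h\<bar> < \<delta> \<longrightarrow> (\<forall>y\<in>closure \<Omega>.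
        \<bar>(u (t + h) y + n (t + h) y - (u t y + n t y)) / h - (dt u t y + dt n t y)\<bar> \<le> \<epsilon>)"
      using uniform_difference_quotient[OF compact_closure[THEN iffD2, OF bounded_domain] t, of
          "\<lambda>s y. u s y + n s y" "\<lambda>s y. dt u s y + dt n s y" \<epsilon>] \<epsilon> by blast
    then show ?thesis using closure_subset by blast
  qed
  have "\<forall>y\<in>\<Omega>. - lap (W t) y + \<beta> * W t y + (dt u t y + dt n t y) \<le> \<beta> * M0 - \<beta> * \<beta> / A * H_star"
    using W_defect[OF M0 t] by blast
  moreover have "\<forall>s\<ge>0. neumann_regular \<Omega> (S s)" "\<forall>s\<ge>0. \<forall>y\<in>\<Omega>. - lap (S s) y + \<beta> * S s y = u s y + n s y"
    using neumann_regular_S S_eq by auto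
  moreover have "x \<in> closure \<Omega>" using x closure_subset by blast
  ultimately obtain D where "((\<lambda>s. S s x) has_real_derivative D) (at t)"
    "D + W t x \<le> (\<beta> * M0 - \<beta> * \<beta> / A * H_star) / \<beta>"
    using resolvent_time_derivative[OF open_domain bounded_domain charts beta t _ _ _ neumann_regular_W[OF t],
        where U = "\<lambda>s y. u s y + n s y" and V = "\<lambda>y. dt u t y + dt n t y"] U' by blast
  moreover have "(\<beta> * M0 - \<beta> * \<beta> / A * H_star) / \<beta> = M0 - \<beta> / A * H_star"
    using beta by (simp add: field_simps)
  ultimately show ?thesis using that by simp
qed

lemma pointwise_bound:
  assumes t: "t \<ge> 0" and x: "x \<in> closure \<Omega>" and D: "D + W t x \<le> K"
  shows "B * D + B * (min 1 (1 / gamma_star \<gamma> vstar) * \<gamma> (B * S t x)) * (u t x + n t x)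
    \<le> \<beta> * B / A * Gamma_fun \<gamma> (B * S t x) + B * K"
proof -
  define m where "m = min 1 (1 / \<gamma> vstar)"
  have v: "vstar \<le> v t x" "A * S t x \<le> v t x" "v t x \<le> B * S t x" using vstar comparison t x by auto
  have "\<gamma> vstar > 0" by (rule A1_pos[OF A1 vstar(1)])
  have g_Bv: "\<gamma> (B * S t x) \<le> \<gamma> (v t x)" "\<gamma> (v t x) \<le> \<gamma> vstar"
    using A1_antimono[OF A1] v vstar(1) by auto
  have "\<gamma> (B * S t x) > 0" using A1_pos[OF A1] v vstar(1) by simp
  moreover have "m \<le> 1" "m \<le> 1 / \<gamma> vstar" "m > 0" using \<open>\<gamma> vstar > 0\<close> by (auto simp: m_def)
  ultimately have "m * \<gamma> (B * S t x) \<le> 1 * \<gamma> (v t x)" "m * \<gamma> (B * S t x) \<le> 1 / \<gamma> vstar * \<gamma> vstar"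
    using g_Bv by (simp_all only: mult_mono less_imp_le order.trans[OF g_Bv])
  then have m_bounds: "m * \<gamma> (B * S t x) \<le> \<gamma> (v t x)" "m * \<gamma> (B * S t x) \<le> 1"
    using \<open>\<gamma> vstar > 0\<close> by auto
  moreover have "u t x \<ge> 0" "n t x \<ge> 0" using u_nonneg n_nonneg t x by auto
  ultimately have "m * \<gamma> (B * S t x) * u t x \<le> \<gamma> (v t x) * u t x"
    "m * \<gamma> (B * S t x) * n t x \<le> 1 * n t x"
    by (intro mult_right_mono; simp)+
  then have "m * \<gamma> (B * S t x) * (u t x + n t x) \<le> u t x * \<gamma> (v t x) + n t x"
    by (simp add: algebra_simps)
  then have "B * (m * \<gamma> (B * S t x) * (u t x + n t x)) \<le> B * (u t x * \<gamma> (v t x) + n t x)"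
    using AB by (intro mult_left_mono) auto
  moreover have "Gamma_fun \<gamma> (A * S t x) \<le> Gamma_fun \<gamma> (B * S t x)"
    using Gamma_mono[OF A1 AS_pos[OF t x]] AS_pos[OF t x] AB by (simp add: zero_less_mult_iff)
  then have "\<beta> * B / A * Gamma_fun \<gamma> (A * S t x) \<le> \<beta> * B / A * Gamma_fun \<gamma> (B * S t x)"
    using beta AB by (intro mult_left_mono) auto
  moreover have "B * D \<le> B * K - B * (u t x * \<gamma> (v t x) + n t x) + \<beta> * B / A * Gamma_fun \<gamma> (A * S t x)"
    using D AB mult_left_mono[of "D" "K - W t x" B] by (simp add: W_def algebra_simps)
  moreover have "B * (m * \<gamma> (B * S t x)) * (u t x + n t x) = B * (m * \<gamma> (B * S t x) * (u t x + n t x))"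
    by (simp add: mult.assoc)
  ultimately show ?thesis
    unfolding m_def[symmetric] gamma_star_eq[OF A1 vstar(1)] by linarith
qed

end

theorem lemma6p2:
  fixes \<Omega> :: "'a::euclidean_space set"
    and \<tau> \<beta> A B vstar :: real
    and \<gamma> f :: "real \<Rightarrow> real"
    and u v n S :: "real \<Rightarrow> 'a \<Rightarrow> real"
  assumes dom: "smooth_bounded_domain \<Omega>"
    and tau: "\<tau> > 0" and beta: "\<beta> > 0"
    and A1: "assumption_A1 \<gamma>"
    and F: "assumption_F f"
    and I_u: "\<forall>x\<in>closure \<Omega>. u 0 x \<ge> 0" and I_u_nz: "\<exists>x\<in>\<Omega>. u 0 x \<noteq> 0"
    and I_n: "\<forall>x\<in>closure \<Omega>. n 0 x \<ge> 0"
    and I_v: "\<forall>x\<in>closure \<Omega>. v 0 x > 0"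
    and sol: "classical_solution_P \<Omega> \<tau> \<beta> \<gamma> f u v n"
    and u_nonneg: "\<forall>t\<ge>0. \<forall>x\<in>closure \<Omega>. u t x \<ge> 0"
    and n_nonneg: "\<forall>t\<ge>0. \<forall>x\<in>closure \<Omega>. n t x \<ge> 0"
    and vstar: "vstar > 0" "\<forall>t\<ge>0. \<forall>x\<in>closure \<Omega>. v t x \<ge> vstar"
    and S_def: "\<forall>t\<ge>0. neumann_resolvent \<Omega> \<beta> (\<lambda>x. u t x + n t x) (S t)"
    and AB: "0 < A" "A \<le> B"
    and comp: "\<forall>t\<ge>0. \<forall>x\<in>closure \<Omega>. A * S t x \<le> v t x \<and> v t x \<le> B * S t x"
  shows "\<exists>C>0. \<forall>t>0. \<forall>x\<in>\<Omega>.
           (\<lambda>s. B * S s x) differentiable (at t) \<and>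
           dt (\<lambda>s y. B * S s y) t x
             + B * (min 1 (1 / gamma_star \<gamma> vstar) * \<gamma> (B * S t x)) * (u t x + n t x)
           \<le> \<beta> * B / A * Gamma_fun \<gamma> (B * S t x) + C"
proof -
  interpret chemotaxis_solution \<Omega> \<tau> \<beta> A B vstar \<gamma> f u v n S
    by unfold_locales (use assms in auto)
  obtain M0 where M0: "\<And>t x. t \<ge> 0 \<Longrightarrow> x \<in> closure \<Omega> \<Longrightarrow> n t x \<le> M0"
    using n_bounded by blast
  define C where "C = max 1 (B * (M0 - \<beta> / A * H_star))"
  show ?thesis
  proof (intro exI[of _ C] conjI allI impI ballI)
    show "C > 0" by (simp add: C_def)
    fix t :: real and x assume t: "t > 0" and x: "x \<in> \<Omega>"
    obtain D where D: "((\<lambda>s. S s x) has_real_derivative D) (at t)" "D + W t x \<le> M0 - \<beta> / A * H_star"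
      using S_time_derivative[OF M0 t x] .
    have BD: "((\<lambda>s. B * S s x) has_real_derivative B * D) (at t)" by (rule DERIV_cmult[OF D(1)])
    then show "(\<lambda>s. B * S s x) differentiable (at t)" using real_differentiable_def by blast
    have "B * (M0 - \<beta> / A * H_star) \<le> C" by (simp add: C_def)
    then show "dt (\<lambda>s y. B * S s y) t x
        + B * (min 1 (1 / gamma_star \<gamma> vstar) * \<gamma> (B * S t x)) * (u t x + n t x)
        \<le> \<beta> * B / A * Gamma_fun \<gamma> (B * S t x) + C"
      using pointwise_bound[OF _ _ D(2)] t x closure_subset DERIV_imp_deriv[OF BD]
      by (force simp: dt_def)
  qed
qed

end
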